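(* Let $A,D\in\mathbb{B}(\mathcal{H})$, $T=\begin{bmatrix}A&0\\0&D\end{bmatrix}\in\mathbb{B}(\mathcal{H}\oplus\mathcal{H})$, $r\ge2$, and $p,q>1$ with $\frac1p+\frac1q=1$. Let $f_1,g_1,f_2,g_2$ be non-negative continuous functions on $[0,\infty)$ with $f_1(t)g_1(t)=f_2(t)g_2(t)=t$ for all $t\ge0$. Define \[ \alpha=\left\|f_1^{rp}(|\mathrm{Re}A+\mathrm{Im}A|)+f_2^{rp}(|\mathrm{Re}A-\mathrm{Im}A|)\right\|,\quad \beta=\left\|f_1^{rp}(|\mathrm{Re}D+\mathrm{Im}D|)+f_2^{rp}(|\mathrm{Re}D-\mathrm{Im}D|)\right\|, \] \[ \gamma=\left\|g_1^{rq}(|\mathrm{Re}A+\mathrm{Im}A|)+g_2^{rq}(|\mathrm{Re}A-\mathrm{Im}A|)\right\|,\quad \delta=\left\|g_1^{rq}(|\mathrm{Re}D+\mathrm{Im}D|)+g_2^{rq}(|\mathrm{Re}D-\mathrm{Im}D|)\right\|, \] \[ \alpha'=\left\|f_1^{rp}(|\mathrm{Re}A+\mathrm{Im}A|)+g_2^{rp}(|\mathrm{Re}A-\mathrm{Im}A|)\right\|,\quad \beta'=\left\|f_1^{rp}(|\mathrm{Re}D+\mathrm{Im}D|)+g_2^{rp}(|\mathrm{Re}D-\mathrm{Im}D|)\right\|, \] \[ \gamma'=\left\|g_1^{rq}(|\mathrm{Re}A+\mathrm{Im}A|)+f_2^{rq}(|\mathrm{Re}A-\mathrm{Im}A|)\right\|,\quad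 \delta'=\left\|g_1^{rq}(|\mathrm{Re}D+\mathrm{Im}D|)+f_2^{rq}(|\mathrm{Re}D-\mathrm{Im}D|)\right\|. \] Then \[ w^r(T)\le\frac12\max(\alpha,\beta)^{1/p}\max(\gamma,\delta)^{1/q} \quad\text{and}\quad w^r(T)\le\frac12\max(\alpha',\beta')^{1/p}\max(\gamma',\delta')^{1/q}. \]
   Context: $\mathcal{H}$ is a complex Hilbert space; $w(X)=\sup\{|\langle Xx,x\rangle|:\|x\|=1\}$ is the numerical radius; $|X|=(X^*X)^{1/2}$; $\mathrm{Re}X=\frac{X+X^*}{2}$ and $\mathrm{Im}X=\frac{X-X^*}{2i}$ (Cartesian decomposition $X=\mathrm{Re}X+i\,\mathrm{Im}X$); $f^s(|X|)$ denotes $(f(|X|))^s$ via continuous functional calculus; $\|\cdot\|$ is the operator norm. *)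

theory Defs
  imports "HOL-Analysis.Analysis" "HOL-Computational_Algebra.Polynomial"
begin

text \<open>A complex Hilbert space is modelled as a real Hilbert space (real inner product,
  complete) together with an orthogonal real-linear map jmul with jmul o jmul = -id,
  i.e. multiplication by the imaginary unit. The complex inner product is
  cinner x y = (x . y) + i (x . jmul y), which is linear in the first argument,
  conjugate-linear in the second, and whose real part is the real inner product.\<close>

class complex_hilbert = real_inner + complete_space +
  fixes jmul :: "'a \<Rightarrow> 'a"
  assumes jmul_add: "jmul (x + y) = jmul x + jmul y"
    and jmul_scaleR: "jmul (c *\<^sub>R x) = c *\<^sub>R jmul x"
    and jmul_jmul: "jmul (jmul x) = - x"
    and inner_jmul_jmul: "inner (jmul x) (jmul y) = inner x y"

instantiation prod :: (complex_hilbert, complex_hilbert) complex_hilbert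
begin
definition jmul_prod_def: "jmul p = (jmul (fst p), jmul (snd p))"
instance
  by standard (auto simp: jmul_prod_def jmul_add jmul_scaleR jmul_jmul inner_jmul_jmul
      inner_prod_def prod_eq_iff)
end

definition cinner :: "'a::complex_hilbert \<Rightarrow> 'a \<Rightarrow> complex" where
  "cinner x y = Complex (inner x y) (inner x (jmul y))"

text \<open>B(H): bounded real-linear maps commuting with multiplication by i.\<close>
definition clinear_op :: "('a::complex_hilbert \<Rightarrow>\<^sub>L 'a) \<Rightarrow> bool" where
  "clinear_op X \<longleftrightarrow> (\<forall>x. X (jmul x) = jmul (X x))"

definition Jop :: "'a::complex_hilbert \<Rightarrow>\<^sub>L 'a" where
  "Jop = Blinfun jmul"

text \<open>Hilbert space adjoint (for complex-linear operators it coincides with the complex adjoint).\<close>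
definition adj :: "('a::complex_hilbert \<Rightarrow>\<^sub>L 'a) \<Rightarrow> ('a \<Rightarrow>\<^sub>L 'a)" where
  "adj X = Blinfun (adjoint (blinfun_apply X))"

text \<open>Cartesian decomposition: Re X = (X + X*)/2, Im X = (X - X*)/(2i) = -(i/2)(X - X*).\<close>
definition ReOp :: "('a::complex_hilbert \<Rightarrow>\<^sub>L 'a) \<Rightarrow> ('a \<Rightarrow>\<^sub>L 'a)" where
  "ReOp X = (1/2) *\<^sub>R (X + adj X)"

definition ImOp :: "('a::complex_hilbert \<Rightarrow>\<^sub>L 'a) \<Rightarrow> ('a \<Rightarrow>\<^sub>L 'a)" where
  "ImOp X = (-1/2) *\<^sub>R (Jop o\<^sub>L (X - adj X))"

definition opow :: "('a::complex_hilbert \<Rightarrow>\<^sub>L 'a) \<Rightarrow> nat \<Rightarrow> ('a \<Rightarrow>\<^sub>L 'a)" where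
  "opow P n = ((\<lambda>Y. P o\<^sub>L Y) ^^ n) id_blinfun"

definition poly_op :: "real poly \<Rightarrow> ('a::complex_hilbert \<Rightarrow>\<^sub>L 'a) \<Rightarrow> ('a \<Rightarrow>\<^sub>L 'a)" where
  "poly_op p P = (\<Sum>i\<le>degree p. coeff p i *\<^sub>R opow P i)"

text \<open>Continuous functional calculus for a positive operator P (spectrum in [0, norm P]):
  f(P) is the norm limit of q_n(P) for any real polynomials q_n converging to f uniformly
  on [0, norm P].\<close>
definition fcalc :: "(real \<Rightarrow> real) \<Rightarrow> ('a::complex_hilbert \<Rightarrow>\<^sub>L 'a) \<Rightarrow> ('a \<Rightarrow>\<^sub>L 'a)" where
  "fcalc f P = (THE Y. \<forall>qs :: nat \<Rightarrow> real poly.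
      uniform_limit {0..norm P} (\<lambda>n t. poly (qs n) t) f sequentially \<longrightarrow>
      (\<lambda>n. poly_op (qs n) P) \<longlonglongrightarrow> Y)"

definition abs_op :: "('a::complex_hilbert \<Rightarrow>\<^sub>L 'a) \<Rightarrow> ('a \<Rightarrow>\<^sub>L 'a)" where
  "abs_op X = fcalc sqrt (adj X o\<^sub>L X)"

text \<open>f^s(|X|) = (f(|X|))^s.\<close>
definition fpow_abs :: "(real \<Rightarrow> real) \<Rightarrow> real \<Rightarrow> ('a::complex_hilbert \<Rightarrow>\<^sub>L 'a) \<Rightarrow> ('a \<Rightarrow>\<^sub>L 'a)" where
  "fpow_abs f s X = fcalc (\<lambda>t. t powr s) (fcalc f (abs_op X))"

text \<open>Numerical radius (the 0 only matters for the trivial space, where w = 0).\<close>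
definition numrad :: "('a::complex_hilbert \<Rightarrow>\<^sub>L 'a) \<Rightarrow> real" where
  "numrad X = Sup ({cmod (cinner (X x) x) | x. norm x = 1} \<union> {0})"

definition diag_op :: "('a::complex_hilbert \<Rightarrow>\<^sub>L 'a) \<Rightarrow> ('a \<Rightarrow>\<^sub>L 'a) \<Rightarrow> (('a \<times> 'a) \<Rightarrow>\<^sub>L ('a \<times> 'a))" where
  "diag_op A D = Blinfun (\<lambda>(x, y). (A x, D y))"

end

theory Submission
  imports Defs
begin

text \<open>For a unit vector x let u and v be the quadratic forms of the self-adjoint operators
  Re A + Im A and Re A - Im A at x. Then |<Ax, x>|^2 = (u^2 + v^2)/2, so by convexity of
  t |-> t^(r/2) we get |<Ax, x>|^r <= (|u|^r + |v|^r)/2. Each of |u|, |v| is controlled by the mixed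
  Schwarz inequality |<Sx, x>| <= <|S|x, x> <= ||f(|S|)x|| ||g(|S|)x||, and the Hoelder-McCarthy
  inequality ||Px||^s <= <P^s x, x> (s >= 2) turns the two factors into quadratic forms of
  f^(rp)(|S|) and g^(rq)(|S|). Hoelder's inequality for two-term sums then bounds |<Ax, x>|^r,
  and the numerical radius of diag(A, D) is at most the larger of those of A and D.

  The continuous functional calculus is obtained from polynomials: a polynomial in a self-adjoint
  operator with form bounds m, M is controlled by its values on [m, M] through a positivity
  certificate (every polynomial nonnegative on [m, M] is a sum of squares times 1, t - m or M - t),
  and Weierstrass approximation carries self-adjointness, monotonicity and multiplicativity over
  to continuous functions.\<close>

section \<open>Adjoints in real Hilbert spaces\<close>

lemma eq_if_inner_eq:
  fixes a b :: "'a::real_inner"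
  assumes "\<And>x. inner x a = inner x b" shows "a = b"
proof -
  have "inner (a - b) a = inner (a - b) b" by (rule assms)
  hence "inner (a - b) (a - b) = 0" by (simp add: inner_diff_right)
  thus ?thesis by simp
qed

lemma parallelogram_law:
  fixes a b :: "'a::real_inner"
  shows "(norm (a - b))\<^sup>2 + (norm (a + b))\<^sup>2 = 2 * (norm a)\<^sup>2 + 2 * (norm b)\<^sup>2"
  by (simp add: power2_norm_eq_inner inner_add_left inner_add_right inner_diff_left
      inner_diff_right inner_commute)

lemma Cauchy_if_norm_diff_square_le:
  fixes xs :: "nat \<Rightarrow> 'a::real_normed_vector"
  assumes "\<And>m n. (norm (xs m - xs n))\<^sup>2 \<le> 2 / real (Suc m) + 2 / real (Suc n)"
  shows "Cauchy xs"
proof (rule metric_CauchyI)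
  fix e :: real assume e: "e > 0"
  obtain N :: nat where N: "4 / e\<^sup>2 < real N" using reals_Archimedean2 by blast
  have "0 < e\<^sup>2" "4 < real N * e\<^sup>2" using N e by (simp_all add: pos_divide_less_eq)
  hence "4 < real (Suc N) * e\<^sup>2" unfolding of_nat_Suc distrib_right by linarith
  hence N': "4 / real (Suc N) < e\<^sup>2" by (simp add: divide_less_eq mult.commute)
  show "\<exists>M. \<forall>m\<ge>M. \<forall>n\<ge>M. dist (xs m) (xs n) < e"
  proof (intro exI allI impI)
    fix m n assume "m \<ge> N" "n \<ge> N"
    hence "2 / real (Suc m) \<le> 2 / real (Suc N)" "2 / real (Suc n) \<le> 2 / real (Suc N)"
      by (auto intro!: divide_left_mono)
    hence "(norm (xs m - xs n))\<^sup>2 < e\<^sup>2" using assms[of m n] N' by linarith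
    thus "dist (xs m) (xs n) < e" using e by (simp add: dist_norm power_less_imp_less_base)
  qed
qed

lemma min_norm_on_level_set_exists:
  fixes \<phi> :: "'a::{real_inner,complete_space} \<Rightarrow> real"
  assumes "bounded_linear \<phi>" and "\<phi> x0 = 1"
  obtains z where "\<phi> z = 1" and "\<And>w. \<phi> w = 1 \<Longrightarrow> norm z \<le> norm w"
proof -
  interpret bounded_linear \<phi> by fact
  define C where "C = {x. \<phi> x = 1}"
  define d where "d = Inf ((\<lambda>x. (norm x)\<^sup>2) ` C)"
  have bdd: "bdd_below ((\<lambda>x. (norm x)\<^sup>2) ` C)" by (rule bdd_belowI[of _ 0]) auto
  have d_le: "d \<le> (norm w)\<^sup>2" if "w \<in> C" for w
    unfolding d_def by (rule cInf_lower) (use that bdd in auto)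
  have "\<exists>x\<in>C. (norm x)\<^sup>2 < d + 1 / real (Suc n)" for n :: nat
  proof -
    have "\<exists>v\<in>(\<lambda>x. (norm x)\<^sup>2) ` C. v < d + 1 / real (Suc n)"
      using assms(2) by (intro cInf_lessD) (auto simp: C_def d_def)
    then show ?thesis by auto
  qed
  then obtain xs where xs_C: "\<And>n. xs n \<in> C" and xs_d: "\<And>n. (norm (xs n))\<^sup>2 < d + 1 / real (Suc n)"
    by metis
  \<comment> \<open>the midpoint of two points of C lies in C, so the parallelogram law makes xs Cauchy\<close>
  have "(norm (xs m - xs n))\<^sup>2 \<le> 2 / real (Suc m) + 2 / real (Suc n)" for m n
  proof -
    have "(xs m + xs n) /\<^sub>R 2 \<in> C" using xs_C[of m] xs_C[of n] by (simp add: C_def add scale)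
    hence "d \<le> (norm ((xs m + xs n) /\<^sub>R 2))\<^sup>2" by (rule d_le)
    hence "d \<le> (norm (xs m + xs n))\<^sup>2 / 4" by (simp add: power_divide)
    with parallelogram_law[of "xs m" "xs n"] xs_d[of m] xs_d[of n] show ?thesis by linarith
  qed
  then obtain z where lim: "xs \<longlonglongrightarrow> z"
    using Cauchy_if_norm_diff_square_le convergent_eq_Cauchy by blast
  have "(\<lambda>n. \<phi> (xs n)) \<longlonglongrightarrow> \<phi> z" by (rule tendsto[OF lim])
  moreover have "(\<lambda>n. \<phi> (xs n)) = (\<lambda>n. 1)" using xs_C by (auto simp: C_def)
  ultimately have "\<phi> z = 1" using LIMSEQ_unique tendsto_const by metis
  moreover have "(norm z)\<^sup>2 \<le> d"
    by (rule LIMSEQ_le[OF tendsto_power[OF tendsto_norm[OF lim]] LIMSEQ_inverse_real_of_nat_add[of d]])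
      (use xs_d less_imp_le in \<open>auto simp: inverse_eq_divide\<close>)
  moreover have "norm z \<le> norm w" if "\<phi> w = 1" for w
  proof -
    have "d \<le> (norm w)\<^sup>2" using d_le that by (simp add: C_def)
    hence "(norm z)\<^sup>2 \<le> (norm w)\<^sup>2" using \<open>(norm z)\<^sup>2 \<le> d\<close> by linarith
    thus ?thesis by (rule power2_le_imp_le) simp
  qed
  ultimately show ?thesis using that by blast
qed

lemma linear_coeff_zero_if_quadratic_nonneg:
  fixes a c :: real
  assumes "a \<ge> 0" and "\<And>t. 0 \<le> 2 * t * c + t\<^sup>2 * a"
  shows "c = 0"
proof -
  define t where "t = - c / (a + 1)"
  have t: "(a + 1) * t = - c" using assms(1) by (simp add: t_def)
  have "(a + 1)\<^sup>2 * (2 * t * c + t\<^sup>2 * a) = 2 * (a + 1) * c * ((a + 1) * t) + ((a + 1) * t)\<^sup>2 * a"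
    by (simp add: power2_eq_square algebra_simps)
  also have "\<dots> = 2 * (a + 1) * c * (- c) + (- c)\<^sup>2 * a" by (simp only: t)
  also have "\<dots> = - (c\<^sup>2 * (a + 2))" by (simp add: power2_eq_square algebra_simps)
  finally have "(a + 1)\<^sup>2 * (2 * t * c + t\<^sup>2 * a) = - (c\<^sup>2 * (a + 2))" .
  moreover have "0 \<le> (a + 1)\<^sup>2 * (2 * t * c + t\<^sup>2 * a)" using assms(2)[of t] by simp
  ultimately have "c\<^sup>2 * (a + 2) \<le> 0" by linarith
  moreover have "c\<^sup>2 * (a + 2) \<ge> 0" using assms(1) by simp
  ultimately have "c\<^sup>2 * (a + 2) = 0" by linarith
  thus ?thesis using assms(1) by simp
qed

lemma min_norm_on_level_set_orthogonal_kernel: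
  fixes \<phi> :: "'a::real_inner \<Rightarrow> real"
  assumes "bounded_linear \<phi>" and "\<phi> z = 1" and "\<And>w. \<phi> w = 1 \<Longrightarrow> norm z \<le> norm w"
    and "\<phi> w = 0"
  shows "inner z w = 0"
proof (rule linear_coeff_zero_if_quadratic_nonneg[where a = "(norm w)\<^sup>2"])
  interpret bounded_linear \<phi> by fact
  fix t :: real
  have "norm z \<le> norm (z + t *\<^sub>R w)" using assms by (intro assms(3)) (simp add: add scale)
  hence "(norm z)\<^sup>2 \<le> (norm (z + t *\<^sub>R w))\<^sup>2" by (simp add: power_mono)
  also have "\<dots> = inner (z + t *\<^sub>R w) (z + t *\<^sub>R w)" by (rule power2_norm_eq_inner)
  also have "\<dots> = inner z z + 2 * t * inner z w + t\<^sup>2 * inner w w"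
    by (simp add: inner_add_left inner_add_right inner_commute power2_eq_square algebra_simps)
  also have "\<dots> = (norm z)\<^sup>2 + 2 * t * inner z w + t\<^sup>2 * (norm w)\<^sup>2"
    by (simp add: dot_square_norm)
  finally show "0 \<le> 2 * t * inner z w + t\<^sup>2 * (norm w)\<^sup>2" by linarith
qed simp

lemma riesz_representation:
  fixes \<phi> :: "'a::{real_inner,complete_space} \<Rightarrow> real"
  assumes "bounded_linear \<phi>"
  shows "\<exists>y. \<forall>x. \<phi> x = inner x y"
proof (cases "\<forall>x. \<phi> x = 0")
  case True then show ?thesis by (intro exI[of _ 0]) simp
next
  case False
  interpret bounded_linear \<phi> by fact
  from False obtain x0 where "\<phi> x0 \<noteq> 0" by auto
  hence "\<phi> (x0 /\<^sub>R \<phi> x0) = 1" by (simp add: scale)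
  then obtain z where z: "\<phi> z = 1" and z_min: "\<And>w. \<phi> w = 1 \<Longrightarrow> norm z \<le> norm w"
    using min_norm_on_level_set_exists assms by blast
  have "\<phi> x = inner x (z /\<^sub>R (norm z)\<^sup>2)" for x
  proof -
    have "\<phi> (x - \<phi> x *\<^sub>R z) = 0" using z by (simp add: diff scale)
    hence "inner z (x - \<phi> x *\<^sub>R z) = 0"
      using min_norm_on_level_set_orthogonal_kernel[OF assms z z_min] by blast
    hence "inner x z = \<phi> x * (norm z)\<^sup>2"
      by (simp add: inner_diff_right inner_commute power2_norm_eq_inner)
    moreover have "z \<noteq> 0" using z by auto
    ultimately show ?thesis by simp
  qed
  thus ?thesis by blast
qed

lemma adjoint_exists:
  fixes X :: "'a::{real_inner,complete_space} \<Rightarrow>\<^sub>L 'a"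
  shows "\<exists>g. bounded_linear g \<and> (\<forall>x y. inner (X x) y = inner x (g y))"
proof -
  have "\<exists>w. \<forall>x. inner (X x) y = inner x w" for y
    by (rule riesz_representation)
      (intro bounded_linear_compose[OF bounded_linear_inner_left] blinfun.bounded_linear_right)
  then obtain g where g: "\<And>x y. inner (X x) y = inner x (g y)" by metis
  have "bounded_linear g"
  proof (rule bounded_linear_intro[where K = "norm X"])
    fix y1 y2 show "g (y1 + y2) = g y1 + g y2"
      by (rule eq_if_inner_eq) (simp add: inner_add_right flip: g)
  next
    fix r y show "g (r *\<^sub>R y) = r *\<^sub>R g y"
      by (rule eq_if_inner_eq) (simp flip: g)
  next
    fix y
    have "(norm (g y))\<^sup>2 = inner (X (g y)) y" by (simp add: g power2_norm_eq_inner)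
    also have "\<dots> \<le> norm X * norm (g y) * norm y"
      by (rule order_trans[OF norm_cauchy_schwarz]) (intro mult_right_mono norm_blinfun; simp)
    finally show "norm (g y) \<le> norm y * norm X"
      by (cases "g y = 0") (auto simp: power2_eq_square mult_ac)
  qed
  with g show ?thesis by blast
qed

lemma adj_inner_right: "inner ((X::'a::complex_hilbert \<Rightarrow>\<^sub>L 'a) x) y = inner x (adj X y)"
proof -
  obtain g where g: "bounded_linear g" "\<forall>x y. inner (X x) y = inner x (g y)"
    using adjoint_exists by blast
  have "adjoint (blinfun_apply X) = g" by (rule adjoint_unique[OF g(2)])
  hence "blinfun_apply (adj X) = g" using bounded_linear_Blinfun_apply[OF g(1)] by (simp add: adj_def)
  thus ?thesis using g(2) by simp
qed

lemma adj_inner_left: "inner (adj (X::'a::complex_hilbert \<Rightarrow>\<^sub>L 'a) x) y = inner x (X y)"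
  using adj_inner_right[of X y x] by (simp add: inner_commute)

definition selfadjoint :: "('a::real_inner \<Rightarrow>\<^sub>L 'a) \<Rightarrow> bool" where
  "selfadjoint X \<longleftrightarrow> (\<forall>x y. inner (X x) y = inner x (X y))"

lemma adj_selfadjoint:
  assumes "selfadjoint (X::'a::complex_hilbert \<Rightarrow>\<^sub>L 'a)" shows "adj X = X"
  by (rule blinfun_eqI, rule eq_if_inner_eq)
    (metis adj_inner_right assms selfadjoint_def)

lemma selfadjoint_add: "selfadjoint S \<Longrightarrow> selfadjoint T \<Longrightarrow> selfadjoint (S + T)"
  by (simp add: selfadjoint_def blinfun.add_left inner_add_left inner_add_right)

lemma selfadjoint_diff: "selfadjoint S \<Longrightarrow> selfadjoint T \<Longrightarrow> selfadjoint (S - T)"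
  by (simp add: selfadjoint_def blinfun.diff_left inner_diff_left inner_diff_right)

lemma selfadjoint_minus: "selfadjoint S \<Longrightarrow> selfadjoint (- S)"
  by (simp add: selfadjoint_def blinfun.minus_left)

lemma selfadjoint_scaleR: "selfadjoint S \<Longrightarrow> selfadjoint (c *\<^sub>R S)"
  by (simp add: selfadjoint_def blinfun.scaleR_left)

lemma selfadjoint_id: "selfadjoint id_blinfun"
  by (simp add: selfadjoint_def)

lemma selfadjoint_zero: "selfadjoint 0"
  by (simp add: selfadjoint_def)

lemma selfadjoint_compose_commuting:
  assumes "selfadjoint S" "selfadjoint T" "S o\<^sub>L T = T o\<^sub>L S"
  shows "selfadjoint (S o\<^sub>L T)"
  using assms unfolding selfadjoint_def by (metis blinfun_apply_blinfun_compose)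

lemma inner_apply_self_le_norm:
  "\<bar>inner ((P :: 'a::real_inner \<Rightarrow>\<^sub>L 'a) x) x\<bar> \<le> norm P * (norm x)\<^sup>2"
proof -
  have "\<bar>inner (P x) x\<bar> \<le> norm (P x) * norm x" by (rule Cauchy_Schwarz_ineq2)
  also have "\<dots> \<le> norm P * norm x * norm x" by (intro mult_right_mono norm_blinfun) auto
  finally show ?thesis by (simp add: power2_eq_square mult.assoc)
qed

lemma inner_jmul_left: "inner (jmul x) y = - inner x (jmul y)"
  by (metis inner_jmul_jmul jmul_jmul inner_minus_left)

lemma norm_jmul: "norm (jmul x) = norm x"
  by (simp add: norm_eq_sqrt_inner inner_jmul_jmul)

lemma bounded_linear_jmul: "bounded_linear (jmul :: 'a::complex_hilbert \<Rightarrow> 'a)"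
  by (rule bounded_linear_intro[where K = 1]) (auto simp: jmul_add jmul_scaleR norm_jmul)

lemma Jop_apply[simp]: "blinfun_apply Jop = jmul"
  unfolding Jop_def by (rule bounded_linear_Blinfun_apply[OF bounded_linear_jmul])

lemma jmul_diff: "jmul (x - y) = jmul x - jmul y"
  using jmul_add[of x "- y"] jmul_scaleR[of "-1" y] by simp

lemma clinear_op_adj:
  assumes "clinear_op (X::'a::complex_hilbert \<Rightarrow>\<^sub>L 'a)"
  shows "adj X (jmul x) = jmul (adj X x)"
proof (rule eq_if_inner_eq)
  fix y
  have "inner y (adj X (jmul x)) = inner (X y) (jmul x)" by (simp add: adj_inner_right)
  also have "\<dots> = - inner (X (jmul y)) x"
    using assms by (simp add: inner_jmul_left clinear_op_def)
  also have "\<dots> = inner y (jmul (adj X x))" by (simp add: adj_inner_right inner_jmul_left)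
  finally show "inner y (adj X (jmul x)) = inner y (jmul (adj X x))" .
qed

lemma ReOp_apply: "ReOp X x = (1/2) *\<^sub>R (X x + adj X x)"
  by (simp add: ReOp_def blinfun.add_left blinfun.scaleR_left)

lemma ImOp_apply: "ImOp X x = (-1/2) *\<^sub>R jmul (X x - adj X x)"
  by (simp only: ImOp_def blinfun.scaleR_left blinfun_apply_blinfun_compose blinfun.diff_left Jop_apply)

lemma selfadjoint_ReOp: "selfadjoint (ReOp (X::'a::complex_hilbert \<Rightarrow>\<^sub>L 'a))"
  unfolding selfadjoint_def ReOp_apply
  by (simp add: inner_add_left inner_add_right adj_inner_right[of X] adj_inner_left[of X] add.commute)

lemma selfadjoint_ImOp:
  assumes "clinear_op (X::'a::complex_hilbert \<Rightarrow>\<^sub>L 'a)"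
  shows "selfadjoint (ImOp X)"
  unfolding selfadjoint_def ImOp_apply
proof (intro allI)
  fix x y
  have cx: "X (jmul y) = jmul (X y)" using assms by (simp add: clinear_op_def)
  have "inner ((-1/2) *\<^sub>R jmul (X x - adj X x)) y = (1/2) * inner (X x - adj X x) (jmul y)"
    by (simp add: inner_jmul_left)
  also have "\<dots> = (1/2) * (inner x (adj X (jmul y)) - inner x (X (jmul y)))"
    by (simp add: inner_diff_left adj_inner_right[of X] adj_inner_left[of X])
  also have "\<dots> = (1/2) * (inner x (jmul (adj X y)) - inner x (jmul (X y)))"
    by (simp add: cx clinear_op_adj[OF assms])
  also have "\<dots> = inner x ((-1/2) *\<^sub>R jmul (X y - adj X y))"
    by (simp add: jmul_diff inner_diff_right algebra_simps)
  finally show "inner ((-1/2) *\<^sub>R jmul (X x - adj X x)) y = inner x ((-1/2) *\<^sub>R jmul (X y - adj X y))" .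
qed

lemma inner_ReOp_self: "inner (ReOp (X::'a::complex_hilbert \<Rightarrow>\<^sub>L 'a) x) x = inner (X x) x"
proof -
  have "inner (adj X x) x = inner (X x) x" using adj_inner_left[of X x x] by (simp add: inner_commute)
  thus ?thesis unfolding ReOp_apply by (simp add: inner_add_left)
qed

lemma inner_ImOp_self:
  assumes "clinear_op (X::'a::complex_hilbert \<Rightarrow>\<^sub>L 'a)"
  shows "inner (ImOp X x) x = inner (X x) (jmul x)"
proof -
  have cx: "X (jmul x) = jmul (X x)" using assms by (simp add: clinear_op_def)
  have "inner (ImOp X x) x = (1/2) * inner (X x - adj X x) (jmul x)"
    unfolding ImOp_apply by (simp add: inner_jmul_left)
  also have "\<dots> = (1/2) * (inner (X x) (jmul x) - inner x (jmul (X x)))"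
    by (simp add: inner_diff_left adj_inner_left[of X] cx)
  also have "\<dots> = inner (X x) (jmul x)"
    using inner_jmul_left[of x "X x"] by (simp add: inner_commute)
  finally show ?thesis .
qed

lemma blinfun_compose_sum_right: "P o\<^sub>L sum f A = (\<Sum>i\<in>A. P o\<^sub>L f i)"
  by (rule blinfun_eqI) (simp add: blinfun.sum_left blinfun.sum_right)

lemma blinfun_compose_scaleR_right: "P o\<^sub>L (c *\<^sub>R X) = c *\<^sub>R (P o\<^sub>L X)"
  by (rule blinfun_eqI) (simp add: blinfun.scaleR_left blinfun.scaleR_right)

lemma blinfun_compose_id_right[simp]: "P o\<^sub>L id_blinfun = P"
  by (rule blinfun_eqI) simp

lemma blinfun_compose_assoc: "(P o\<^sub>L Q) o\<^sub>L R = P o\<^sub>L (Q o\<^sub>L R)"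
  by (rule blinfun_eqI) simp

lemma opow_0[simp]: "opow P 0 = id_blinfun"
  by (simp add: opow_def)

lemma opow_Suc: "opow P (Suc n) = P o\<^sub>L opow P n"
  by (simp add: opow_def)

lemma poly_op_sum_atMost:
  assumes "degree p \<le> N"
  shows "poly_op p P = (\<Sum>i\<le>N. coeff p i *\<^sub>R opow P i)"
  unfolding poly_op_def
  by (rule sum.mono_neutral_left) (use assms in \<open>auto simp: coeff_eq_0\<close>)

lemma poly_op_pCons: "poly_op (pCons a p) P = a *\<^sub>R id_blinfun + (P o\<^sub>L poly_op p P)"
proof -
  have "poly_op (pCons a p) P = (\<Sum>i\<le>Suc (degree p). coeff (pCons a p) i *\<^sub>R opow P i)"
    by (rule poly_op_sum_atMost) (rule degree_pCons_le)
  also have "\<dots> = (\<Sum>i\<le>degree p. P o\<^sub>L (coeff p i *\<^sub>R opow P i)) + a *\<^sub>R id_blinfun"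
    by (subst sum.atMost_Suc_shift) (simp add: opow_Suc blinfun_compose_scaleR_right)
  also have "\<dots> = a *\<^sub>R id_blinfun + (P o\<^sub>L poly_op p P)"
    by (simp add: poly_op_def blinfun_compose_sum_right add.commute)
  finally show ?thesis .
qed

lemma poly_op_0[simp]: "poly_op 0 P = 0"
  by (simp add: poly_op_def)

lemma poly_op_const: "poly_op [:a:] P = a *\<^sub>R id_blinfun"
  using poly_op_pCons[of a 0 P] by simp

lemma poly_op_one: "poly_op 1 P = id_blinfun"
  using poly_op_const[of 1 P] by (simp add: one_pCons)

lemma poly_op_linear: "poly_op [:a, b:] P = a *\<^sub>R id_blinfun + b *\<^sub>R P"
  using poly_op_pCons[of a "[:b:]" P] by (simp add: poly_op_const blinfun_compose_scaleR_right)

lemma poly_op_X: "poly_op [:0, 1:] P = P"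
  by (simp add: poly_op_linear)

lemma poly_op_add: "poly_op (p + q) P = poly_op p P + poly_op q P"
proof -
  define N where "N = max (degree p) (degree q)"
  have "degree (p + q) \<le> N" "degree p \<le> N" "degree q \<le> N"
    unfolding N_def using degree_add_le_max by auto
  thus ?thesis by (simp add: poly_op_sum_atMost[of _ N] scaleR_add_left sum.distrib)
qed

lemma poly_op_smult: "poly_op (smult c p) P = c *\<^sub>R poly_op p P"
  using degree_smult_le[of c p]
  by (simp add: poly_op_sum_atMost[of _ "degree p"] scaleR_sum_right)

lemma poly_op_diff: "poly_op (p - q) P = poly_op p P - poly_op q P"
  using poly_op_add[of "p - q" q P] by (simp add: eq_diff_eq)

lemma poly_op_mult: "poly_op (p * q) P = poly_op p P o\<^sub>L poly_op q P"
proof (induction p rule: pCons_induct)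
  case 0 then show ?case by simp
next
  case (pCons a p)
  have "poly_op (pCons a p * q) P = a *\<^sub>R poly_op q P + (P o\<^sub>L (poly_op p P o\<^sub>L poly_op q P))"
    by (simp add: poly_op_add poly_op_smult poly_op_pCons pCons.IH)
  also have "\<dots> = poly_op (pCons a p) P o\<^sub>L poly_op q P"
    by (rule blinfun_eqI) (simp add: poly_op_pCons blinfun.add_left blinfun.scaleR_left)
  finally show ?case .
qed

lemma poly_op_commute: "poly_op p P o\<^sub>L poly_op q P = poly_op q P o\<^sub>L poly_op p P"
  by (simp flip: poly_op_mult add: mult.commute)

lemma poly_op_square: "poly_op [:0, 0, 1:] P = P o\<^sub>L P"
proof -
  have "[:0, 0, 1:] = [:0, 1:] * [:(0::real), 1:]" by simp
  thus ?thesis by (simp only: poly_op_mult poly_op_X)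
qed

lemma poly_op_pcompose_square: "poly_op (pcompose q [:0, 0, 1:]) S = poly_op q (S o\<^sub>L S)"
  by (induction q rule: pCons_induct)
    (simp_all add: pcompose_pCons poly_op_add poly_op_const poly_op_mult poly_op_square
      poly_op_pCons blinfun_compose_assoc)

lemma poly_op_zero_operator: "poly_op q 0 = poly q 0 *\<^sub>R id_blinfun"
  by (induction q rule: pCons_induct) (simp_all add: poly_op_pCons)

lemma selfadjoint_poly_op: "selfadjoint S \<Longrightarrow> selfadjoint (poly_op p S)"
proof (induction p rule: pCons_induct)
  case 0 then show ?case by (simp add: selfadjoint_zero)
next
  case (pCons a p)
  have "selfadjoint (S o\<^sub>L poly_op p S)"
    using pCons poly_op_commute[of "[:0, 1:]" S p]
    by (intro selfadjoint_compose_commuting) (simp_all add: poly_op_X)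
  thus ?case by (simp add: poly_op_pCons selfadjoint_add selfadjoint_scaleR selfadjoint_id)
qed

section \<open>Polynomials nonnegative on an interval\<close>

definition form_bounded :: "real \<Rightarrow> real \<Rightarrow> ('a::real_inner \<Rightarrow>\<^sub>L 'a) \<Rightarrow> bool" where
  "form_bounded m M S \<longleftrightarrow>
     selfadjoint S \<and> (\<forall>x. m * (norm x)\<^sup>2 \<le> inner (S x) x \<and> inner (S x) x \<le> M * (norm x)\<^sup>2)"

inductive_set interval_cone :: "real \<Rightarrow> real \<Rightarrow> real poly set" for m M where
  square_mult: "w = 1 \<or> w = [:-m, 1:] \<or> w = [:M, -1:] \<Longrightarrow> r * r * w \<in> interval_cone m M"
| add: "p \<in> interval_cone m M \<Longrightarrow> q \<in> interval_cone m M \<Longrightarrow> p + q \<in> interval_cone m M"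

lemma interval_cone_poly_op_nonneg:
  assumes S: "form_bounded m M S" and p: "p \<in> interval_cone m M"
  shows "0 \<le> inner (poly_op p S x) x"
  using p
proof (induction arbitrary: x)
  case (square_mult w r)
  define R where "R = poly_op r S"
  define W where "W = poly_op w S"
  have "selfadjoint R" unfolding R_def using S by (simp add: form_bounded_def selfadjoint_poly_op)
  hence "inner (poly_op (r * r * w) S x) x = inner (W (R x)) (R x)"
    using poly_op_commute[of r S w]
    by (simp add: poly_op_mult R_def W_def selfadjoint_def) (metis blinfun_apply_blinfun_compose)
  also have "\<dots> \<ge> 0"
  proof -
    have "m * (norm (R x))\<^sup>2 \<le> inner (S (R x)) (R x)" "inner (S (R x)) (R x) \<le> M * (norm (R x))\<^sup>2"
      using S by (auto simp: form_bounded_def)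
    with square_mult.hyps show ?thesis
      by (auto simp: W_def poly_op_one poly_op_linear blinfun.add_left blinfun.scaleR_left
          blinfun.diff_left inner_add_left inner_diff_left power2_norm_eq_inner)
  qed
  finally show ?case .
next
  case (add p q)
  then show ?case by (simp add: poly_op_add blinfun.add_left inner_add_left)
qed

lemma interval_cone_square_mult: "p \<in> interval_cone m M \<Longrightarrow> s * s * p \<in> interval_cone m M"
proof (induction rule: interval_cone.induct)
  case (square_mult w r)
  hence "(s * r) * (s * r) * w \<in> interval_cone m M" by (rule interval_cone.square_mult)
  then show ?case by (simp add: mult_ac)
next
  case (add p q)
  then show ?case by (simp add: distrib_left interval_cone.add)
qed

lemma interval_cone_smult: "c \<ge> 0 \<Longrightarrow> p \<in> interval_cone m M \<Longrightarrow> smult c p \<in> interval_cone m M"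
  using interval_cone_square_mult[of p m M "[:sqrt c:]"] by simp

lemma interval_cone_const: "c \<ge> 0 \<Longrightarrow> [:c:] \<in> interval_cone m M"
  using interval_cone.square_mult[of 1 m M "[:sqrt c:]"] by simp

lemma interval_cone_mult_generator:
  assumes "m < M" and v: "v = [:-m, 1:] \<or> v = [:M, -1:]"
  shows "p \<in> interval_cone m M \<Longrightarrow> v * p \<in> interval_cone m M"
proof (induction rule: interval_cone.induct)
  case (square_mult w r)
  define L where "L = [:-m, 1:]"
  define B where "B = [:M, -1:]"
  consider "w = 1" | "w = v" | "v * w = L * B"
    using v square_mult by (auto simp: L_def B_def mult.commute)
  then show ?case
  proof cases
    case 1
    then show ?thesis using interval_cone.square_mult[of v m M r] v by (auto simp: mult_ac)
  next
    case 2
    then show ?thesis using interval_cone.square_mult[of 1 m M "r * v"] by (simp add: mult_ac)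
  next
    case 3
    \<comment> \<open>since v w = L B, the identity B^2 L + L^2 B = (M - m) L B writes r^2 v w inside the cone\<close>
    have LB: "B * B * L + L * L * B = smult (M - m) (L * B)"
      by (simp add: L_def B_def poly_eq_iff coeff_mult algebra_simps)
    have "(r * B) * (r * B) * L + (r * L) * (r * L) * B = r * r * (B * B * L + L * L * B)"
      by (simp add: algebra_simps)
    also have "\<dots> = r * r * smult (M - m) (L * B)" by (simp only: LB)
    also have "\<dots> = smult (M - m) (v * (r * r * w))" using 3 by (simp add: mult_ac)
    finally have "v * (r * r * w) = smult (1 / (M - m)) ((r * B) * (r * B) * L + (r * L) * (r * L) * B)"
      using assms(1) by simp
    moreover have "(r * B) * (r * B) * L + (r * L) * (r * L) * B \<in> interval_cone m M"
      by (intro interval_cone.add interval_cone.square_mult) (simp_all add: L_def B_def)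
    ultimately show ?thesis using assms(1) by (simp add: interval_cone_smult)
  qed
next
  case (add p q)
  then show ?case by (simp add: distrib_left interval_cone.add)
qed

lemma poly_nonneg_at_if_nonneg_elsewhere:
  fixes p :: "real poly"
  assumes "m < M" and l: "l \<in> {m..M}" and nonneg: "\<And>t. t \<in> {m..M} \<Longrightarrow> t \<noteq> l \<Longrightarrow> 0 \<le> poly p t"
  shows "0 \<le> poly p l"
proof (rule tendsto_lowerbound)
  show "(poly p \<longlongrightarrow> poly p l) (at l within {m..M})"
    using poly_isCont[of l p] unfolding isCont_def by (rule tendsto_within_subset) simp
  show "\<forall>\<^sub>F t in at l within {m..M}. 0 \<le> poly p t"
    using nonneg by (auto simp: eventually_at_filter)
  show "at l within {m..M} \<noteq> bot"
    using assms(1) l by (cases "l = m"; cases "l = M")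
      (auto simp: at_within_Icc_at at_within_Icc_at_right at_within_Icc_at_left)
qed

lemma poly_split_at_min_on_Icc:
  fixes q :: "real poly"
  assumes "m < M" and "degree q \<noteq> 0" and "\<forall>t\<in>{m..M}. 0 \<le> poly q t"
  obtains l c q1 where "l \<in> {m..M}" "c \<ge> 0" "q = [:c:] + [:-l, 1:] * q1" "degree q1 < degree q"
    "\<And>t. t \<in> {m..M} \<Longrightarrow> 0 \<le> (t - l) * poly q1 t"
proof -
  have "\<exists>l\<in>{m..M}. \<forall>t\<in>{m..M}. poly q l \<le> poly q t"
    by (rule continuous_attains_inf) (use assms(1) in \<open>auto intro: continuous_on_poly[OF continuous_on_id]\<close>)
  then obtain l where l: "l \<in> {m..M}" and l_min: "\<forall>t\<in>{m..M}. poly q l \<le> poly q t" by blast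
  define c where "c = poly q l"
  have "[:-l, 1:] dvd (q - [:c:])" by (simp add: poly_eq_0_iff_dvd[symmetric] c_def)
  then obtain q1 where q1: "q - [:c:] = [:-l, 1:] * q1" by (rule dvdE)
  hence q: "q = [:c:] + [:-l, 1:] * q1" by (simp add: algebra_simps)
  have "q1 \<noteq> 0" using assms(2) q by auto
  hence "degree ([:-l, 1:] * q1) = 1 + degree q1" by (subst degree_mult_eq) auto
  moreover have "degree (q - [:c:]) \<le> degree q" using degree_diff_le_max[of q "[:c:]"] by simp
  ultimately have "degree q1 < degree q" using q1 by simp
  moreover have "0 \<le> (t - l) * poly q1 t" if "t \<in> {m..M}" for t
  proof -
    have "poly q t = c + (t - l) * poly q1 t" by (subst q) (simp add: algebra_simps)
    moreover have "poly q l \<le> poly q t" using l_min that by blast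
    ultimately show ?thesis by (simp add: c_def)
  qed
  moreover have "c \<ge> 0" using assms(3) l by (simp add: c_def)
  ultimately show ?thesis using that l q by simp
qed

lemma root_factor_at_interior_sign_change:
  fixes q1 :: "real poly"
  assumes "m < l" "l < M" and sign: "\<And>t. t \<in> {m..M} \<Longrightarrow> 0 \<le> (t - l) * poly q1 t"
  obtains q2 where "q1 = [:-l, 1:] * q2" "\<forall>t\<in>{m..M}. 0 \<le> poly q2 t"
proof -
  have pos: "0 \<le> poly q1 t" if "t \<in> {l..M}" "t \<noteq> l" for t
    using sign[of t] that assms(1) by (simp add: zero_le_mult_iff)
  have neg: "0 \<le> poly (- q1) t" if "t \<in> {m..l}" "t \<noteq> l" for t
    using sign[of t] that assms(2) by (simp add: zero_le_mult_iff)
  \<comment> \<open>q1 changes sign at the interior point l, so l is a root of q1\<close>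
  have "0 \<le> poly q1 l" by (rule poly_nonneg_at_if_nonneg_elsewhere[OF assms(2) _ pos]) (use assms in auto)
  moreover have "0 \<le> poly (- q1) l"
    by (rule poly_nonneg_at_if_nonneg_elsewhere[OF assms(1) _ neg]) (use assms in auto)
  ultimately have "[:-l, 1:] dvd q1" by (simp add: poly_eq_0_iff_dvd[symmetric])
  then obtain q2 where q2: "q1 = [:-l, 1:] * q2" by (rule dvdE)
  have "0 \<le> poly q2 t" if "t \<in> {m..M}" "t \<noteq> l" for t
  proof -
    have "0 \<le> (t - l)\<^sup>2 * poly q2 t" using sign[OF that(1)] q2 by (simp add: power2_eq_square algebra_simps)
    moreover have "(t - l)\<^sup>2 > 0" using that(2) by simp
    ultimately show ?thesis by (simp add: zero_le_mult_iff)
  qed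
  hence "\<forall>t\<in>{m..M}. 0 \<le> poly q2 t"
    using poly_nonneg_at_if_nonneg_elsewhere[of m M l q2] assms(1,2) by force
  with q2 show ?thesis by (rule that)
qed

lemma nonneg_on_Icc_poly_decompose:
  fixes q :: "real poly"
  assumes mM: "m < M" and "degree q \<noteq> 0" and "\<forall>t\<in>{m..M}. 0 \<le> poly q t"
  obtains c w q' where "c \<ge> 0" "q = [:c:] + w * q'" "degree q' < degree q"
    "\<forall>t\<in>{m..M}. 0 \<le> poly q' t"
    "w = [:-m, 1:] \<or> w = [:M, -1:] \<or> (\<exists>l. w = [:-l, 1:] * [:-l, 1:])"
proof -
  obtain l c q1 where l: "l \<in> {m..M}" and c: "c \<ge> 0" and q: "q = [:c:] + [:-l, 1:] * q1"
    and deg: "degree q1 < degree q" and sign: "\<And>t. t \<in> {m..M} \<Longrightarrow> 0 \<le> (t - l) * poly q1 t"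
    using poly_split_at_min_on_Icc assms by blast
  have pos: "0 \<le> poly q1 t" if "t \<in> {m..M}" "l < t" for t
    using sign[OF that(1)] that(2) by (simp add: zero_le_mult_iff)
  have neg: "0 \<le> poly (- q1) t" if "t \<in> {m..M}" "t < l" for t
    using sign[OF that(1)] that(2) by (simp add: zero_le_mult_iff)
  consider "l = m" | "l = M" | "m < l" "l < M" using l by fastforce
  then show ?thesis
  proof cases
    case 1
    have "\<forall>t\<in>{m..M}. 0 \<le> poly q1 t"
      using pos poly_nonneg_at_if_nonneg_elsewhere[OF mM l, of q1] 1 by force
    then show ?thesis using that c q deg 1 by blast
  next
    case 2
    have nonneg: "\<forall>t\<in>{m..M}. 0 \<le> poly (- q1) t"
      using neg poly_nonneg_at_if_nonneg_elsewhere[OF mM l, of "- q1"] 2 by force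
    have "q = [:c:] + [:M, -1:] * - q1" using q 2 by (simp add: poly_eq_iff algebra_simps)
    from that[OF c this _ nonneg] deg show ?thesis by simp
  next
    case 3
    then obtain q2 where q2: "q1 = [:-l, 1:] * q2" and "\<forall>t\<in>{m..M}. 0 \<le> poly q2 t"
      using root_factor_at_interior_sign_change sign by blast
    moreover have "degree q2 < degree q"
    proof (cases "q2 = 0")
      case False
      hence "degree q1 = 1 + degree q2" unfolding q2 by (subst degree_mult_eq) auto
      thus ?thesis using deg by simp
    qed (use assms(2) in simp)
    moreover have "q = [:c:] + ([:-l, 1:] * [:-l, 1:]) * q2" by (simp only: q q2 mult.assoc)
    ultimately show ?thesis using that c by blast
  qed
qed

lemma nonneg_on_Icc_imp_interval_cone:
  assumes mM: "m < M"
  shows "\<forall>t\<in>{m..M}. 0 \<le> poly q t \<Longrightarrow> q \<in> interval_cone m M"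
proof (induction "degree q" arbitrary: q rule: less_induct)
  case (less q)
  show ?case
  proof (cases "degree q = 0")
    case True
    then obtain a where "q = [:a:]" by (rule degree_eq_zeroE)
    moreover have "0 \<le> poly q m" using less.prems mM by auto
    ultimately show ?thesis using interval_cone_const by simp
  next
    case False
    then obtain c w q' where c: "c \<ge> 0" and q: "q = [:c:] + w * q'" and "degree q' < degree q"
      and "\<forall>t\<in>{m..M}. 0 \<le> poly q' t"
      and w: "w = [:-m, 1:] \<or> w = [:M, -1:] \<or> (\<exists>l. w = [:-l, 1:] * [:-l, 1:])"
      using nonneg_on_Icc_poly_decompose[OF mM _ less.prems] by blast
    hence q': "q' \<in> interval_cone m M" using less.hyps by blast
    have "w * q' \<in> interval_cone m M"
    proof -
      consider "w = [:-m, 1:] \<or> w = [:M, -1:]" | l where "w = [:-l, 1:] * [:-l, 1:]" using w by blast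
      then show ?thesis
      proof cases
        case 1
        then show ?thesis by (rule interval_cone_mult_generator[OF mM _ q'])
      next
        case (2 l)
        show ?thesis unfolding 2 by (rule interval_cone_square_mult[OF q'])
      qed
    qed
    thus ?thesis using q interval_cone.add[OF interval_cone_const[OF c]] by simp
  qed
qed

lemma poly_op_nonneg_if_nonneg_on_Icc:
  assumes "form_bounded m M S" "m < M" "\<forall>t\<in>{m..M}. 0 \<le> poly q t"
  shows "0 \<le> inner (poly_op q S x) x"
  by (rule interval_cone_poly_op_nonneg[OF assms(1) nonneg_on_Icc_imp_interval_cone[OF assms(2,3)]])

lemma norm_poly_op_le:
  assumes S: "form_bounded m M S" "m < M" and c: "\<forall>t\<in>{m..M}. \<bar>poly q t\<bar> \<le> c"
  shows "norm (poly_op q S) \<le> c"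
proof (rule norm_blinfun_bound)
  show c0: "0 \<le> c" using c S(2) by (meson abs_ge_zero atLeastAtMost_iff order.trans less_imp_le order_refl)
  fix x
  define Q where "Q = poly_op q S"
  have "\<forall>t\<in>{m..M}. 0 \<le> poly ([:c * c:] - q * q) t"
  proof
    fix t assume "t \<in> {m..M}"
    hence "\<bar>poly q t\<bar> * \<bar>poly q t\<bar> \<le> c * c" using c c0 by (intro mult_mono) auto
    thus "0 \<le> poly ([:c * c:] - q * q) t" by (simp add: abs_mult_self_eq)
  qed
  hence "0 \<le> inner (poly_op ([:c * c:] - q * q) S x) x" by (rule poly_op_nonneg_if_nonneg_on_Icc[OF S])
  hence "0 \<le> c * c * (norm x)\<^sup>2 - inner (Q (Q x)) x"
    by (simp add: poly_op_diff poly_op_const poly_op_mult Q_def blinfun.diff_left blinfun.scaleR_left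
        inner_diff_left power2_norm_eq_inner)
  moreover have "inner (Q (Q x)) x = (norm (Q x))\<^sup>2"
  proof -
    have "selfadjoint Q" using S(1) by (simp add: Q_def form_bounded_def selfadjoint_poly_op)
    thus ?thesis by (simp add: selfadjoint_def power2_norm_eq_inner)
  qed
  ultimately have "(norm (Q x))\<^sup>2 \<le> (c * norm x)\<^sup>2" by (simp add: power_mult_distrib power2_eq_square mult_ac)
  thus "norm (Q x) \<le> c * norm x" by (rule power2_le_imp_le) (use c0 in simp)
qed

section \<open>Continuous functional calculus for positive operators\<close>

instance complex_hilbert \<subseteq> banach ..

definition positive_op :: "('a::real_inner \<Rightarrow>\<^sub>L 'a) \<Rightarrow> bool" where
  "positive_op P \<longleftrightarrow> selfadjoint P \<and> (\<forall>x. 0 \<le> inner (P x) x)"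

lemma selfadjoint_form_bounded_norm:
  assumes "selfadjoint S" shows "form_bounded (- norm S) (norm S) S"
  unfolding form_bounded_def
proof (intro conjI allI assms)
  fix x
  have "\<bar>inner (S x) x\<bar> \<le> norm S * (norm x)\<^sup>2" by (rule inner_apply_self_le_norm)
  thus "- norm S * (norm x)\<^sup>2 \<le> inner (S x) x" "inner (S x) x \<le> norm S * (norm x)\<^sup>2" by auto
qed

lemma positive_op_form_bounded: "positive_op P \<Longrightarrow> form_bounded 0 (norm P) P"
  using inner_apply_self_le_norm[of P] by (auto simp: positive_op_def form_bounded_def abs_le_iff)

lemma poly_op_nonneg_if_positive_op:
  assumes P: "positive_op P" and q: "\<forall>t\<in>{0..norm P}. 0 \<le> poly q t"
  shows "0 \<le> inner (poly_op q P x) x"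
proof (cases "P = 0")
  case True
  then show ?thesis using q by (simp add: poly_op_zero_operator blinfun.scaleR_left)
next
  case False
  then show ?thesis by (intro poly_op_nonneg_if_nonneg_on_Icc[OF positive_op_form_bounded[OF P] _ q]) simp
qed

lemma norm_poly_op_le_if_positive_op:
  assumes P: "positive_op P" and q: "\<forall>t\<in>{0..norm P}. \<bar>poly q t\<bar> \<le> c"
  shows "norm (poly_op q P) \<le> c"
proof (cases "P = 0")
  case True
  have "norm (poly_op q P) = \<bar>poly q 0\<bar> * norm (id_blinfun :: 'a \<Rightarrow>\<^sub>L 'a)"
    by (simp add: True poly_op_zero_operator)
  also have "\<dots> \<le> \<bar>poly q 0\<bar>" by (intro mult_left_le norm_blinfun_id_le) simp
  moreover have "\<bar>poly q 0\<bar> \<le> c" using q by simp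
  ultimately show ?thesis by linarith
next
  case False
  then show ?thesis by (intro norm_poly_op_le[OF positive_op_form_bounded[OF P] _ q]) simp
qed

definition poly_approx :: "real set \<Rightarrow> (nat \<Rightarrow> real poly) \<Rightarrow> (real \<Rightarrow> real) \<Rightarrow> bool" where
  "poly_approx K qs f \<longleftrightarrow> uniform_limit K (\<lambda>n t. poly (qs n) t) f sequentially"

lemma polynomial_function_eq_poly:
  fixes g :: "real \<Rightarrow> real"
  assumes "polynomial_function g"
  shows "\<exists>q. g = poly q"
proof -
  obtain a n where g: "g = (\<lambda>x. \<Sum>i\<le>n. a i * x ^ i)"
    using assms real_polynomial_function_iff_sum by (auto simp: real_polynomial_function_eq)
  show ?thesis
    by (intro exI[of _ "\<Sum>i\<le>n. monom (a i) i"]) (simp add: g poly_sum poly_monom fun_eq_iff)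
qed

lemma poly_approx_exists:
  fixes f :: "real \<Rightarrow> real"
  assumes "continuous_on {a..b} f"
  obtains qs where "poly_approx {a..b} qs f"
proof -
  obtain g where g: "uniform_limit {a..b} g f sequentially" "\<And>n. polynomial_function (g n)"
    using Stone_Weierstrass_uniform_limit[OF compact_Icc assms] by blast
  have "\<forall>n. \<exists>q. g n = poly q" using g(2) polynomial_function_eq_poly by blast
  then obtain qs where "\<forall>n. g n = poly (qs n)" by metis
  hence "g = (\<lambda>n t. poly (qs n) t)" by (simp add: fun_eq_iff)
  thus ?thesis using g(1) that by (simp add: poly_approx_def)
qed

lemma poly_approx_close:
  assumes "poly_approx K qs f" "poly_approx K rs f" "e > 0"
  shows "\<exists>N. \<forall>n\<ge>N. \<forall>m\<ge>N. \<forall>t\<in>K. \<bar>poly (qs n) t - poly (rs m) t\<bar> \<le> e"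
proof -
  have "e / 2 > 0" using assms(3) by simp
  from uniform_limitD[OF assms(1)[unfolded poly_approx_def] this]
    uniform_limitD[OF assms(2)[unfolded poly_approx_def] this]
  have "\<forall>\<^sub>F n in sequentially. (\<forall>t\<in>K. dist (poly (qs n) t) (f t) < e / 2) \<and>
      (\<forall>t\<in>K. dist (poly (rs n) t) (f t) < e / 2)"
    by (rule eventually_conj)
  then obtain N where N: "\<And>n. n \<ge> N \<Longrightarrow> (\<forall>t\<in>K. dist (poly (qs n) t) (f t) < e / 2) \<and>
      (\<forall>t\<in>K. dist (poly (rs n) t) (f t) < e / 2)"
    unfolding eventually_sequentially by blast
  show ?thesis
  proof (intro exI allI impI ballI)
    fix n m t assume "n \<ge> N" "m \<ge> N" "t \<in> K"
    hence "\<bar>poly (qs n) t - f t\<bar> < e / 2" "\<bar>poly (rs m) t - f t\<bar> < e / 2"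
      using N[of n] N[of m] by (auto simp: dist_real_def)
    thus "\<bar>poly (qs n) t - poly (rs m) t\<bar> \<le> e" by linarith
  qed
qed

lemma Cauchy_poly_op:
  assumes P: "positive_op P" and q: "poly_approx {0..norm P} qs f"
  shows "Cauchy (\<lambda>n. poly_op (qs n) P)"
proof (rule metric_CauchyI)
  fix e :: real assume e: "e > 0"
  hence "e / 2 > 0" by simp
  from poly_approx_close[OF q q this] obtain N where
    N: "\<forall>n\<ge>N. \<forall>m\<ge>N. \<forall>t\<in>{0..norm P}. \<bar>poly (qs n) t - poly (qs m) t\<bar> \<le> e / 2"
    by blast
  have "norm (poly_op (qs m) P - poly_op (qs n) P) \<le> e / 2" if "m \<ge> N" "n \<ge> N" for m n
    unfolding poly_op_diff[symmetric] by (intro norm_poly_op_le_if_positive_op[OF P]) (use N that in auto)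
  thus "\<exists>M. \<forall>m\<ge>M. \<forall>n\<ge>M. dist (poly_op (qs m) P) (poly_op (qs n) P) < e"
    using e by (intro exI[of _ N] allI impI) (fastforce simp: dist_norm)
qed

lemma poly_op_tendsto_indep:
  assumes P: "positive_op P" and q: "poly_approx {0..norm P} qs f" and r: "poly_approx {0..norm P} rs f"
    and lim: "(\<lambda>n. poly_op (qs n) P) \<longlonglongrightarrow> Y"
  shows "(\<lambda>n. poly_op (rs n) P) \<longlonglongrightarrow> Y"
proof -
  have "(\<lambda>n. poly_op (rs n) P - poly_op (qs n) P) \<longlonglongrightarrow> 0"
  proof (rule tendstoI)
    fix e :: real assume e: "e > 0"
    hence "e / 2 > 0" by simp
    from poly_approx_close[OF r q this] obtain N where
      N: "\<forall>n\<ge>N. \<forall>m\<ge>N. \<forall>t\<in>{0..norm P}. \<bar>poly (rs n) t - poly (qs m) t\<bar> \<le> e / 2"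
      by blast
    have "norm (poly_op (rs n) P - poly_op (qs n) P) \<le> e / 2" if "n \<ge> N" for n
      unfolding poly_op_diff[symmetric] by (intro norm_poly_op_le_if_positive_op[OF P]) (use N that in auto)
    thus "\<forall>\<^sub>F n in sequentially. dist (poly_op (rs n) P - poly_op (qs n) P) 0 < e"
      using e unfolding eventually_sequentially by (intro exI[of _ N] allI impI) fastforce
  qed
  from tendsto_add[OF this lim] show ?thesis by simp
qed

lemma poly_op_tendsto_fcalc:
  fixes P :: "'a::complex_hilbert \<Rightarrow>\<^sub>L 'a"
  assumes P: "positive_op P" and q: "poly_approx {0..norm P} qs f"
  shows "(\<lambda>n. poly_op (qs n) P) \<longlonglongrightarrow> fcalc f P"
proof -
  obtain Y where Y: "(\<lambda>n. poly_op (qs n) P) \<longlonglongrightarrow> Y"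
    using Cauchy_poly_op[OF P q] convergent_eq_Cauchy by blast
  have "fcalc f P = Y"
    unfolding fcalc_def
  proof (rule the_equality)
    show "\<forall>rs. uniform_limit {0..norm P} (\<lambda>n t. poly (rs n) t) f sequentially \<longrightarrow>
        (\<lambda>n. poly_op (rs n) P) \<longlonglongrightarrow> Y"
      using poly_op_tendsto_indep[OF P q _ Y] by (simp add: poly_approx_def)
    fix Z assume "\<forall>rs. uniform_limit {0..norm P} (\<lambda>n t. poly (rs n) t) f sequentially \<longrightarrow>
        (\<lambda>n. poly_op (rs n) P) \<longlonglongrightarrow> Z"
    hence "(\<lambda>n. poly_op (qs n) P) \<longlonglongrightarrow> Z" using q by (simp add: poly_approx_def)
    thus "Z = Y" using Y LIMSEQ_unique by blast
  qed
  thus ?thesis using Y by simp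
qed

lemma tendsto_inner_apply:
  assumes "Y \<longlonglongrightarrow> (Z :: 'a::real_inner \<Rightarrow>\<^sub>L 'a)"
  shows "(\<lambda>n. inner (Y n x) y) \<longlonglongrightarrow> inner (Z x) y"
  by (intro tendsto_intros blinfun.tendsto[OF assms tendsto_const])

lemma ge_limit_if_eventually_ge_approx:
  fixes a :: "nat \<Rightarrow> real"
  assumes lim: "a \<longlonglongrightarrow> A" and C: "C \<ge> 0"
    and ev: "\<And>d. d > 0 \<Longrightarrow> \<forall>\<^sub>F n in sequentially. B - d * C \<le> a n"
  shows "B \<le> A"
proof (rule field_le_epsilon)
  fix e :: real assume e: "e > 0"
  hence "B - e / (C + 1) * C \<le> A" using C by (intro tendsto_lowerbound[OF lim ev]) auto
  moreover have "e / (C + 1) * C \<le> e" using e C by (simp add: field_simps)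
  ultimately show "B \<le> A + e" by linarith
qed

lemma fcalc_poly:
  fixes P :: "'a::complex_hilbert \<Rightarrow>\<^sub>L 'a"
  assumes "positive_op P"
  shows "fcalc (poly q) P = poly_op q P"
proof -
  have "poly_approx {0..norm P} (\<lambda>n. q) (poly q)" unfolding poly_approx_def by (rule uniform_limit_const)
  from poly_op_tendsto_fcalc[OF assms this] show ?thesis using LIMSEQ_unique tendsto_const by blast
qed

lemma selfadjoint_fcalc:
  fixes P :: "'a::complex_hilbert \<Rightarrow>\<^sub>L 'a"
  assumes P: "positive_op P" and f: "continuous_on {0..norm P} f"
  shows "selfadjoint (fcalc f P)"
proof -
  obtain qs where q: "poly_approx {0..norm P} qs f" using poly_approx_exists[OF f] by blast
  note lim = tendsto_inner_apply[OF poly_op_tendsto_fcalc[OF P q]]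
  have "inner (poly_op (qs n) P x) y = inner (poly_op (qs n) P y) x" for n x y
    using P selfadjoint_poly_op[of P "qs n"] by (simp add: positive_op_def selfadjoint_def inner_commute)
  hence "inner (fcalc f P x) y = inner (fcalc f P y) x" for x y
    using lim[of x y] lim[of y x] LIMSEQ_unique by auto
  thus ?thesis by (simp add: selfadjoint_def inner_commute)
qed

lemma inner_fcalc_mono:
  fixes P :: "'a::complex_hilbert \<Rightarrow>\<^sub>L 'a"
  assumes P: "positive_op P" and f: "continuous_on {0..norm P} f" and g: "continuous_on {0..norm P} g"
    and le: "\<forall>t\<in>{0..norm P}. g t \<le> f t"
  shows "inner (fcalc g P x) x \<le> inner (fcalc f P x) x"
proof -
  obtain qs where q: "poly_approx {0..norm P} qs f" using poly_approx_exists[OF f] by blast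
  obtain rs where r: "poly_approx {0..norm P} rs g" using poly_approx_exists[OF g] by blast
  have "0 \<le> inner (fcalc f P x) x - inner (fcalc g P x) x"
  proof (rule ge_limit_if_eventually_ge_approx[where C = "2 * (norm x)\<^sup>2"])
    show "(\<lambda>n. inner (poly_op (qs n) P x) x - inner (poly_op (rs n) P x) x) \<longlonglongrightarrow>
        inner (fcalc f P x) x - inner (fcalc g P x) x"
      by (intro tendsto_diff tendsto_inner_apply poly_op_tendsto_fcalc P q r)
    fix d :: real assume d: "d > 0"
    from uniform_limitD[OF q[unfolded poly_approx_def] d] uniform_limitD[OF r[unfolded poly_approx_def] d]
    show "\<forall>\<^sub>F n in sequentially.
        0 - d * (2 * (norm x)\<^sup>2) \<le> inner (poly_op (qs n) P x) x - inner (poly_op (rs n) P x) x"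
    proof eventually_elim
      case (elim n)
      have "\<forall>t\<in>{0..norm P}. 0 \<le> poly (qs n - rs n + [:2 * d:]) t"
        using elim le by (fastforce simp: dist_real_def)
      hence "0 \<le> inner (poly_op (qs n - rs n + [:2 * d:]) P x) x" by (rule poly_op_nonneg_if_positive_op[OF P])
      thus ?case
        by (simp add: poly_op_add poly_op_diff poly_op_const blinfun.add_left blinfun.diff_left
            blinfun.scaleR_left inner_add_left inner_diff_left power2_norm_eq_inner)
    qed
  qed simp
  thus ?thesis by simp
qed

lemma positive_fcalc:
  fixes P :: "'a::complex_hilbert \<Rightarrow>\<^sub>L 'a"
  assumes P: "positive_op P" and f: "continuous_on {0..norm P} f" and nonneg: "\<forall>t\<in>{0..norm P}. 0 \<le> f t"
  shows "positive_op (fcalc f P)"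
  unfolding positive_op_def
proof (intro conjI allI)
  show "selfadjoint (fcalc f P)" by (rule selfadjoint_fcalc[OF P f])
  fix x
  have "inner (fcalc (poly 0) P x) x \<le> inner (fcalc f P x) x"
    by (rule inner_fcalc_mono[OF P f]) (use nonneg in \<open>auto intro: continuous_on_poly[OF continuous_on_id]\<close>)
  thus "0 \<le> inner (fcalc f P x) x" by (simp add: fcalc_poly[OF P])
qed

lemma fcalc_cong:
  fixes P :: "'a::complex_hilbert \<Rightarrow>\<^sub>L 'a"
  assumes P: "positive_op P" and f: "continuous_on {0..norm P} f" and eq: "\<forall>t\<in>{0..norm P}. f t = g t"
  shows "fcalc f P = fcalc g P"
proof -
  obtain qs where q: "poly_approx {0..norm P} qs f" using poly_approx_exists[OF f] by blast
  hence "poly_approx {0..norm P} qs g" unfolding poly_approx_def using eq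
    by (subst uniform_limit_cong'[where i = f]) auto
  thus ?thesis using poly_op_tendsto_fcalc[OF P q] poly_op_tendsto_fcalc[OF P] LIMSEQ_unique by blast
qed

lemma fcalc_mult:
  fixes P :: "'a::complex_hilbert \<Rightarrow>\<^sub>L 'a"
  assumes P: "positive_op P" and f: "continuous_on {0..norm P} f" and g: "continuous_on {0..norm P} g"
  shows "fcalc (\<lambda>t. f t * g t) P = fcalc f P o\<^sub>L fcalc g P"
proof -
  obtain qs where q: "poly_approx {0..norm P} qs f" using poly_approx_exists[OF f] by blast
  obtain rs where r: "poly_approx {0..norm P} rs g" using poly_approx_exists[OF g] by blast
  have "poly_approx {0..norm P} (\<lambda>n. qs n * rs n) (\<lambda>t. f t * g t)"
    unfolding poly_approx_def poly_mult
    by (rule uniform_lim_mult[OF q[unfolded poly_approx_def] r[unfolded poly_approx_def]])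
      (rule compact_imp_bounded[OF compact_continuous_image[OF _ compact_Icc]], fact)+
  from poly_op_tendsto_fcalc[OF P this]
  have "(\<lambda>n. poly_op (qs n) P o\<^sub>L poly_op (rs n) P) \<longlonglongrightarrow> fcalc (\<lambda>t. f t * g t) P"
    by (simp add: poly_op_mult)
  moreover have "(\<lambda>n. poly_op (qs n) P o\<^sub>L poly_op (rs n) P) \<longlonglongrightarrow> (fcalc f P o\<^sub>L fcalc g P)"
    by (rule bounded_bilinear.tendsto[OF bounded_bilinear_blinfun_compose
          poly_op_tendsto_fcalc[OF P q] poly_op_tendsto_fcalc[OF P r]])
  ultimately show ?thesis using LIMSEQ_unique by blast
qed

lemma positive_op_compose_self:
  fixes S :: "'a::complex_hilbert \<Rightarrow>\<^sub>L 'a"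
  assumes "selfadjoint S" shows "positive_op (S o\<^sub>L S)"
  unfolding positive_op_def
proof (intro conjI allI)
  show "selfadjoint (S o\<^sub>L S)" by (rule selfadjoint_compose_commuting[OF assms assms refl])
  fix x
  have "inner ((S o\<^sub>L S) x) x = inner (S x) (S x)" using assms by (simp add: selfadjoint_def)
  thus "0 \<le> inner ((S o\<^sub>L S) x) x" by simp
qed

lemma norm_square_le_norm_compose_self:
  fixes S :: "'a::complex_hilbert \<Rightarrow>\<^sub>L 'a"
  assumes "selfadjoint S" shows "(norm S)\<^sup>2 \<le> norm (S o\<^sub>L S)"
proof -
  have "norm S \<le> sqrt (norm (S o\<^sub>L S))"
  proof (rule norm_blinfun_bound)
    fix x
    have "(norm (S x))\<^sup>2 = inner ((S o\<^sub>L S) x) x"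
      using assms by (simp add: selfadjoint_def power2_norm_eq_inner)
    also have "\<dots> \<le> (sqrt (norm (S o\<^sub>L S)) * norm x)\<^sup>2"
      using inner_apply_self_le_norm[of "S o\<^sub>L S" x] by (simp add: power_mult_distrib)
    finally show "norm (S x) \<le> sqrt (norm (S o\<^sub>L S)) * norm x" by (rule power2_le_imp_le) simp
  qed simp
  thus ?thesis by (metis norm_ge_zero power_mono real_sqrt_pow2)
qed

lemma abs_op_selfadjoint: "selfadjoint S \<Longrightarrow> abs_op S = fcalc sqrt (S o\<^sub>L (S::'a::complex_hilbert \<Rightarrow>\<^sub>L 'a))"
  by (simp add: abs_op_def adj_selfadjoint)

lemma positive_abs_op:
  fixes S :: "'a::complex_hilbert \<Rightarrow>\<^sub>L 'a"
  assumes "selfadjoint S" shows "positive_op (abs_op S)"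
  unfolding abs_op_selfadjoint[OF assms]
  by (rule positive_fcalc[OF positive_op_compose_self[OF assms]]) (auto intro: continuous_intros)

lemma inner_le_poly_op_compose_self:
  fixes S :: "'a::complex_hilbert \<Rightarrow>\<^sub>L 'a"
  assumes S: "selfadjoint S" "S \<noteq> 0" and q: "\<forall>t\<in>{- norm S..norm S}. t \<le> poly q (t * t) + d"
  shows "inner (S x) x \<le> inner (poly_op q (S o\<^sub>L S) x) x + d * (norm x)\<^sup>2"
proof -
  have "form_bounded (- norm S) (norm S) S" by (rule selfadjoint_form_bounded_norm[OF S(1)])
  moreover have "- norm S < norm S" using S(2) by simp
  moreover have "\<forall>t\<in>{- norm S..norm S}. 0 \<le> poly (pcompose q [:0, 0, 1:] - [:0, 1:] + [:d:]) t"
  proof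
    fix t assume "t \<in> {- norm S..norm S}"
    with q have "t \<le> poly q (t * t) + d" by blast
    thus "0 \<le> poly (pcompose q [:0, 0, 1:] - [:0, 1:] + [:d:]) t" by (simp add: poly_pcompose)
  qed
  ultimately have "0 \<le> inner (poly_op (pcompose q [:0, 0, 1:] - [:0, 1:] + [:d:]) S x) x"
    by (rule poly_op_nonneg_if_nonneg_on_Icc)
  thus ?thesis
    by (simp add: poly_op_add poly_op_diff poly_op_const poly_op_X poly_op_pcompose_square
        blinfun.add_left blinfun.diff_left blinfun.scaleR_left inner_add_left inner_diff_left
        power2_norm_eq_inner)
qed

lemma inner_le_inner_abs_op:
  fixes S :: "'a::complex_hilbert \<Rightarrow>\<^sub>L 'a"
  assumes S: "selfadjoint S" shows "inner (S x) x \<le> inner (abs_op S x) x"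
proof (cases "S = 0")
  case True
  then show ?thesis using positive_abs_op[OF S] by (simp add: positive_op_def)
next
  case False
  define P where "P = S o\<^sub>L S"
  have P: "positive_op P" unfolding P_def by (rule positive_op_compose_self[OF S])
  have SP: "(norm S)\<^sup>2 \<le> norm P" unfolding P_def by (rule norm_square_le_norm_compose_self[OF S])
  have "continuous_on {0..norm P} sqrt" by (intro continuous_intros)
  then obtain qs where q: "poly_approx {0..norm P} qs sqrt" by (rule poly_approx_exists)
  show ?thesis
  proof (rule ge_limit_if_eventually_ge_approx[where C = "(norm x)\<^sup>2"])
    show "(\<lambda>n. inner (poly_op (qs n) P x) x) \<longlonglongrightarrow> inner (abs_op S x) x"
      unfolding abs_op_selfadjoint[OF S] P_def[symmetric]
      by (rule tendsto_inner_apply[OF poly_op_tendsto_fcalc[OF P q]])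
    fix d :: real assume d: "d > 0"
    from uniform_limitD[OF q[unfolded poly_approx_def] d]
    show "\<forall>\<^sub>F n in sequentially. inner (S x) x - d * (norm x)\<^sup>2 \<le> inner (poly_op (qs n) P x) x"
    proof eventually_elim
      case (elim n)
      have "t \<le> poly (qs n) (t * t) + d" if "t \<in> {- norm S..norm S}" for t
      proof -
        have "\<bar>t\<bar> * \<bar>t\<bar> \<le> norm S * norm S" using that by (intro mult_mono) auto
        hence "t * t \<in> {0..norm P}" using SP by (simp add: power2_eq_square)
        hence "dist (poly (qs n) (t * t)) (sqrt (t * t)) < d" using elim by blast
        hence "\<bar>poly (qs n) (t * t) - sqrt (t * t)\<bar> < d" by (simp only: dist_real_def)
        moreover have "t \<le> sqrt (t * t)" by simp
        ultimately show ?thesis by linarith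
      qed
      hence "inner (S x) x \<le> inner (poly_op (qs n) P x) x + d * (norm x)\<^sup>2"
        unfolding P_def by (intro inner_le_poly_op_compose_self[OF S False]) blast
      thus ?case by simp
    qed
  qed simp
qed

lemma abs_op_uminus: "abs_op (- S) = abs_op (S::'a::complex_hilbert \<Rightarrow>\<^sub>L 'a)"
proof -
  have "adj (- S) o\<^sub>L (- S) = adj S o\<^sub>L S"
    by (rule blinfun_eqI, rule eq_if_inner_eq) (simp add: adj_inner_right[symmetric] blinfun.minus_left)
  thus ?thesis by (simp add: abs_op_def)
qed

lemma abs_inner_le_inner_abs_op:
  fixes S :: "'a::complex_hilbert \<Rightarrow>\<^sub>L 'a"
  assumes "selfadjoint S" shows "\<bar>inner (S x) x\<bar> \<le> inner (abs_op S x) x"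
  using inner_le_inner_abs_op[OF assms, of x] inner_le_inner_abs_op[OF selfadjoint_minus[OF assms], of x]
  by (simp add: abs_op_uminus blinfun.minus_left)

lemma powr_tangent_le:
  fixes u b k :: real
  assumes u: "u \<ge> 0" and b: "b > 0" and k: "k \<ge> 1"
  shows "b powr k + k * b powr (k - 1) * (u - b) \<le> u powr k"
proof -
  have bk: "b powr (k - 1) * b = b powr k" using b by (simp add: powr_diff)
  show ?thesis
  proof (cases "u = 0")
    case True
    have "b powr k + k * b powr (k - 1) * (u - b) = (1 - k) * b powr k"
      using True bk by (simp add: algebra_simps)
    also have "\<dots> \<le> 0" using k by (simp add: mult_nonpos_nonneg)
    finally show ?thesis using True by simp
  next
    case False
    hence u0: "u > 0" using u by simp
    have "(u powr k) powr (1/k) * (b powr k) powr (1 - 1/k) \<le> (1/k) * u powr k + (1 - 1/k) * b powr k"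
      by (rule Youngs_inequality_0) (use k u0 b in auto)
    moreover have "(u powr k) powr (1/k) = u" using k u0 by (simp add: powr_powr)
    moreover have "(b powr k) powr (1 - 1/k) = b powr (k - 1)" using k by (simp add: powr_powr algebra_simps)
    ultimately have "k * (u * b powr (k - 1)) \<le> k * ((1/k) * u powr k + (1 - 1/k) * b powr k)"
      using k by (intro mult_left_mono) auto
    hence "k * u * b powr (k - 1) \<le> u powr k + (k - 1) * b powr k"
      using k by (simp add: algebra_simps)
    thus ?thesis using bk by (simp add: algebra_simps)
  qed
qed

lemma powr_midpoint_le:
  fixes X Y k :: real
  assumes X: "X \<ge> 0" and Y: "Y \<ge> 0" and k: "k \<ge> 1"
  shows "((X + Y) / 2) powr k \<le> (X powr k + Y powr k) / 2"
proof (cases "X + Y = 0")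
  case True
  then show ?thesis using X Y by simp
next
  case False
  define b where "b = (X + Y) / 2"
  have b: "b > 0" using False X Y by (simp add: b_def)
  have "b powr k + k * b powr (k - 1) * (X - b) + (b powr k + k * b powr (k - 1) * (Y - b))
      \<le> X powr k + Y powr k"
    using powr_tangent_le[OF X b k] powr_tangent_le[OF Y b k] by linarith
  moreover have "k * b powr (k - 1) * (X - b) + k * b powr (k - 1) * (Y - b) = 0"
    by (simp add: b_def algebra_simps)
  ultimately show ?thesis by (simp add: b_def)
qed

lemma powr_half_of_square: "(a\<^sup>2) powr (r / 2) = \<bar>a\<bar> powr r" for a r :: real
proof -
  have "(a\<^sup>2) powr (r / 2) = (\<bar>a\<bar> powr 2) powr (r / 2)" by simp
  also have "\<dots> = \<bar>a\<bar> powr r" by (simp only: powr_powr) simp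
  finally show ?thesis .
qed

lemma young_powr:
  fixes a b p q :: real
  assumes "a \<ge> 0" "b \<ge> 0" "p > 1" "q > 1" "1/p + 1/q = 1"
  shows "a powr (1/p) * b powr (1/q) \<le> (1/p) * a + (1/q) * b"
proof (cases "a = 0 \<or> b = 0")
  case False
  then show ?thesis using assms by (intro Youngs_inequality_0) auto
qed (use assms in auto)

lemma holder_two_terms:
  fixes a1 a2 b1 b2 p q :: real
  assumes nonneg: "a1 \<ge> 0" "a2 \<ge> 0" "b1 \<ge> 0" "b2 \<ge> 0"
    and p: "p > 1" and q: "q > 1" and pq: "1/p + 1/q = 1"
  shows "a1 powr (1/p) * b1 powr (1/q) + a2 powr (1/p) * b2 powr (1/q)
      \<le> (a1 + a2) powr (1/p) * (b1 + b2) powr (1/q)"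
proof (cases "a1 + a2 = 0 \<or> b1 + b2 = 0")
  case True
  hence "(a1 = 0 \<and> a2 = 0) \<or> (b1 = 0 \<and> b2 = 0)" using nonneg by auto
  thus ?thesis using p q by auto
next
  case False
  define A B where "A = a1 + a2" and "B = b1 + b2"
  have A: "A > 0" and B: "B > 0" using False nonneg by (auto simp: A_def B_def)
  define C where "C = A powr (1/p) * B powr (1/q)"
  \<comment> \<open>normalize both pairs and apply Young's inequality termwise\<close>
  have "a1 powr (1/p) * b1 powr (1/q) + a2 powr (1/p) * b2 powr (1/q)
      = C * ((a1 / A) powr (1/p) * (b1 / B) powr (1/q) + (a2 / A) powr (1/p) * (b2 / B) powr (1/q))"
    using A B by (simp add: C_def powr_divide algebra_simps)
  also have "\<dots> \<le> C * ((1/p) * (a1 / A) + (1/q) * (b1 / B) + ((1/p) * (a2 / A) + (1/q) * (b2 / B)))"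
    using nonneg A B p q pq by (intro mult_left_mono add_mono young_powr) (auto simp: C_def)
  also have "\<dots> = C * ((1/p) * ((a1 + a2) / A) + (1/q) * ((b1 + b2) / B))"
    by (simp add: algebra_simps add_divide_distrib)
  also have "\<dots> = C * (1/p + 1/q)" using A B by (simp add: A_def B_def)
  finally show ?thesis using pq by (simp add: C_def A_def B_def)
qed

section \<open>Mixed Schwarz and Hoelder-McCarthy inequalities\<close>

definition schwarz_pair :: "(real \<Rightarrow> real) \<Rightarrow> (real \<Rightarrow> real) \<Rightarrow> bool" where
  "schwarz_pair f g \<longleftrightarrow> continuous_on {0..} f \<and> continuous_on {0..} g \<and>
     (\<forall>t\<ge>0. f t \<ge> 0 \<and> g t \<ge> 0 \<and> f t * g t = t)"

lemma schwarz_pair_continuous_on: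
  assumes "schwarz_pair f g" shows "continuous_on {0..c} f" "continuous_on {0..c} g"
  using assms continuous_on_subset[of "{0..}" f "{0..c}"] continuous_on_subset[of "{0..}" g "{0..c}"]
  by (auto simp: schwarz_pair_def)

lemma schwarz_pair_nonneg:
  assumes "schwarz_pair f g" shows "\<forall>t\<in>{0..c}. 0 \<le> f t" "\<forall>t\<in>{0..c}. 0 \<le> g t"
  using assms by (simp_all add: schwarz_pair_def)

lemma schwarz_pair_commute: "schwarz_pair f g \<Longrightarrow> schwarz_pair g f"
  by (auto simp: schwarz_pair_def mult.commute)

lemma mixed_schwarz:
  fixes M :: "'a::complex_hilbert \<Rightarrow>\<^sub>L 'a"
  assumes M: "positive_op M" and fg: "schwarz_pair f g"
  shows "inner (M x) x \<le> norm (fcalc f M x) * norm (fcalc g M x)"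
proof -
  note f = schwarz_pair_continuous_on(1)[OF fg] and g = schwarz_pair_continuous_on(2)[OF fg]
  have "fcalc f M o\<^sub>L fcalc g M = fcalc (\<lambda>t. f t * g t) M" by (rule fcalc_mult[OF M f g, symmetric])
  also have "\<dots> = fcalc (poly [:0, 1:]) M"
    by (rule fcalc_cong[OF M]) (use fg in \<open>auto intro!: continuous_intros f g simp: schwarz_pair_def\<close>)
  also have "\<dots> = M" by (simp add: fcalc_poly[OF M] poly_op_X)
  finally have "inner (M x) x = inner (fcalc g M x) (fcalc f M x)"
    using selfadjoint_fcalc[OF M f] by (metis blinfun_apply_blinfun_compose selfadjoint_def)
  also have "\<dots> \<le> norm (fcalc g M x) * norm (fcalc f M x)" by (rule norm_cauchy_schwarz)
  finally show ?thesis by (simp add: mult.commute)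
qed

lemma powr_ge_tangent_at_square:
  fixes b s t :: real
  assumes "b > 0" "s \<ge> 2" "t \<ge> 0"
  shows "b powr (s/2) + s/2 * b powr (s/2 - 1) * (t\<^sup>2 - b) \<le> t powr s"
  using powr_tangent_le[of "t\<^sup>2" b "s/2"] assms by (simp add: powr_half_of_square)

lemma holder_mccarthy:
  fixes P :: "'a::complex_hilbert \<Rightarrow>\<^sub>L 'a"
  assumes P: "positive_op P" and s: "s \<ge> 2" and x: "norm x = 1"
  shows "norm (P x) powr s \<le> inner (fcalc (\<lambda>t. t powr s) P x) x"
proof -
  have cont: "continuous_on {0..norm P} (\<lambda>t. t powr s)"
    using s by (intro continuous_on_powr' continuous_intros) auto
  define b where "b = (norm (P x))\<^sup>2"
  show ?thesis
  proof (cases "b = 0")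
    case True
    then show ?thesis using positive_fcalc[OF P cont] by (simp add: b_def positive_op_def)
  next
    case False
    hence b: "b > 0" by (simp add: b_def)
    \<comment> \<open>the quadratic c0 + c1 t^2 is tangent to t^s at t = |Px|, and its operator form is exact there\<close>
    define c1 where "c1 = s/2 * b powr (s/2 - 1)"
    define c0 where "c0 = b powr (s/2) - c1 * b"
    define g where "g = [:c0:] + smult c1 [:0, 0, 1:]"
    have "poly g t \<le> t powr s" if "t \<in> {0..norm P}" for t
    proof -
      have "poly g t = b powr (s/2) + c1 * (t\<^sup>2 - b)"
        by (simp add: g_def c0_def power2_eq_square algebra_simps)
      thus ?thesis using powr_ge_tangent_at_square[OF b s, of t] that by (simp add: c1_def)
    qed
    hence "inner (fcalc (poly g) P x) x \<le> inner (fcalc (\<lambda>t. t powr s) P x) x"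
      by (intro inner_fcalc_mono[OF P cont]) (auto intro: continuous_on_poly continuous_on_id)
    moreover have "inner (fcalc (poly g) P x) x = b powr (s/2)"
    proof -
      have "inner (P (P x)) x = b"
        using P by (simp add: positive_op_def selfadjoint_def b_def power2_norm_eq_inner)
      moreover have "fcalc (poly g) P = c0 *\<^sub>R id_blinfun + c1 *\<^sub>R (P o\<^sub>L P)"
        unfolding fcalc_poly[OF P] g_def by (simp only: poly_op_add poly_op_const poly_op_smult poly_op_square)
      ultimately show ?thesis
        using x by (simp add: blinfun.add_left blinfun.scaleR_left inner_add_left c0_def
            flip: power2_norm_eq_inner)
    qed
    moreover have "norm (P x) powr s = b powr (s/2)" by (simp add: b_def powr_half_of_square)
    ultimately show ?thesis by simp
  qed
qed

lemma abs_inner_powr_le_fpow_abs: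
  fixes S :: "'a::complex_hilbert \<Rightarrow>\<^sub>L 'a"
  assumes S: "selfadjoint S" and fg: "schwarz_pair f g"
    and r: "r \<ge> 2" and p: "p > 1" and q: "q > 1" and x: "norm x = 1"
  shows "\<bar>inner (S x) x\<bar> powr r \<le>
    (inner (fpow_abs f (r*p) S x) x) powr (1/p) * (inner (fpow_abs g (r*q) S x) x) powr (1/q)"
proof -
  define M where "M = abs_op S"
  have M: "positive_op M" unfolding M_def by (rule positive_abs_op[OF S])
  have "positive_op (fcalc f M)" "positive_op (fcalc g M)"
    by (intro positive_fcalc[OF M] schwarz_pair_continuous_on[OF fg] schwarz_pair_nonneg[OF fg])+
  moreover have "r * p \<ge> 2" "r * q \<ge> 2"
    using r p q mult_mono[of 2 r 1 p] mult_mono[of 2 r 1 q] by auto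
  ultimately have hf: "norm (fcalc f M x) powr (r * p) \<le> inner (fpow_abs f (r*p) S x) x"
    and hg: "norm (fcalc g M x) powr (r * q) \<le> inner (fpow_abs g (r*q) S x) x"
    unfolding fpow_abs_def M_def[symmetric] using holder_mccarthy x by blast+
  have "\<bar>inner (S x) x\<bar> \<le> norm (fcalc f M x) * norm (fcalc g M x)"
    using abs_inner_le_inner_abs_op[OF S] mixed_schwarz[OF M fg] unfolding M_def by (rule order_trans)
  hence "\<bar>inner (S x) x\<bar> powr r \<le> (norm (fcalc f M x) * norm (fcalc g M x)) powr r"
    using r by (intro powr_mono2) auto
  also have "\<dots> = (norm (fcalc f M x) powr (r * p)) powr (1/p) * (norm (fcalc g M x) powr (r * q)) powr (1/q)"
    using p q by (simp add: powr_mult powr_powr)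
  also have "\<dots> \<le> (inner (fpow_abs f (r*p) S x) x) powr (1/p) * (inner (fpow_abs g (r*q) S x) x) powr (1/q)"
    using p q hf hg by (intro mult_mono powr_mono2) auto
  finally show ?thesis .
qed

section \<open>The numerical radius of a block diagonal operator\<close>

lemma cmod_cinner: "cmod (cinner x y) = sqrt ((inner x y)\<^sup>2 + (inner x (jmul y))\<^sup>2)"
  by (simp add: cinner_def complex_norm)

lemma cinner_Pair: "cinner ((a::'a::complex_hilbert), (b::'a)) (c, d) = cinner a c + cinner b d"
  by (simp add: cinner_def inner_prod_def jmul_prod_def complex_eq_iff)

lemma cmod_cinner_scaleR:
  fixes A :: "'a::complex_hilbert \<Rightarrow>\<^sub>L 'a"
  shows "cmod (cinner (A (c *\<^sub>R x)) (c *\<^sub>R x)) = c\<^sup>2 * cmod (cinner (A x) x)"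
proof -
  have "cmod (cinner (A (c *\<^sub>R x)) (c *\<^sub>R x))
      = sqrt ((c\<^sup>2)\<^sup>2 * ((inner (A x) x)\<^sup>2 + (inner (A x) (jmul x))\<^sup>2))"
    by (simp add: cmod_cinner blinfun.scaleR_right jmul_scaleR power_mult_distrib power2_eq_square
        algebra_simps)
  also have "\<dots> = sqrt ((c\<^sup>2)\<^sup>2) * sqrt ((inner (A x) x)\<^sup>2 + (inner (A x) (jmul x))\<^sup>2)"
    by (rule real_sqrt_mult)
  also have "\<dots> = c\<^sup>2 * cmod (cinner (A x) x)" by (simp only: real_sqrt_abs abs_power2 cmod_cinner)
  finally show ?thesis .
qed

lemma cmod_cinner_square:
  fixes A :: "'a::complex_hilbert \<Rightarrow>\<^sub>L 'a"
  assumes "clinear_op A"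
  shows "(cmod (cinner (A x) x))\<^sup>2 =
    ((inner ((ReOp A + ImOp A) x) x)\<^sup>2 + (inner ((ReOp A - ImOp A) x) x)\<^sup>2) / 2"
  by (simp add: cmod_cinner blinfun.add_left blinfun.diff_left inner_add_left inner_diff_left
      inner_ReOp_self inner_ImOp_self[OF assms] power2_eq_square algebra_simps)

lemma positive_fpow_abs:
  fixes S :: "'a::complex_hilbert \<Rightarrow>\<^sub>L 'a"
  assumes S: "selfadjoint S" and fg: "schwarz_pair f g" and s: "s > 0"
  shows "positive_op (fpow_abs f s S)"
proof -
  have M: "positive_op (abs_op S)" by (rule positive_abs_op[OF S])
  have F: "positive_op (fcalc f (abs_op S))"
    by (rule positive_fcalc[OF M schwarz_pair_continuous_on(1)[OF fg] schwarz_pair_nonneg(1)[OF fg]])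
  show ?thesis
    unfolding fpow_abs_def
    by (rule positive_fcalc[OF F]) (use s in \<open>auto intro: continuous_on_powr' continuous_intros\<close>)
qed

lemma cinner_powr_le_unit:
  fixes A :: "'a::complex_hilbert \<Rightarrow>\<^sub>L 'a"
  assumes A: "clinear_op A" and r: "r \<ge> 2" and p: "p > 1" and q: "q > 1" and pq: "1/p + 1/q = 1"
    and fg: "schwarz_pair f g" and hk: "schwarz_pair h k" and x: "norm x = 1"
  shows "cmod (cinner (A x) x) powr r \<le> 1/2 *
     (norm (fpow_abs f (r*p) (ReOp A + ImOp A) + fpow_abs h (r*p) (ReOp A - ImOp A))) powr (1/p) *
     (norm (fpow_abs g (r*q) (ReOp A + ImOp A) + fpow_abs k (r*q) (ReOp A - ImOp A))) powr (1/q)"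
proof -
  define S S' where "S = ReOp A + ImOp A" and "S' = ReOp A - ImOp A"
  have S: "selfadjoint S" and S': "selfadjoint S'"
    unfolding S_def S'_def using selfadjoint_ReOp selfadjoint_ImOp[OF A]
    by (auto intro: selfadjoint_add selfadjoint_diff)
  define F G F' G' where "F = fpow_abs f (r*p) S" and "G = fpow_abs g (r*q) S"
    and "F' = fpow_abs h (r*p) S'" and "G' = fpow_abs k (r*q) S'"
  have rpq: "r * p > 0" "r * q > 0" using r p q by auto
  have "positive_op F" "positive_op G" "positive_op F'" "positive_op G'"
    unfolding F_def G_def F'_def G'_def
    using positive_fpow_abs[OF S fg rpq(1)] positive_fpow_abs[OF S schwarz_pair_commute[OF fg] rpq(2)]
      positive_fpow_abs[OF S' hk rpq(1)] positive_fpow_abs[OF S' schwarz_pair_commute[OF hk] rpq(2)]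
    by blast+
  hence nonneg: "inner (F x) x \<ge> 0" "inner (F' x) x \<ge> 0" "inner (G x) x \<ge> 0" "inner (G' x) x \<ge> 0"
    by (simp_all add: positive_op_def)
  have le_norm: "inner (X x) x \<le> norm X" for X :: "'a \<Rightarrow>\<^sub>L 'a"
    using inner_apply_self_le_norm[of X x] x by simp
  have "cmod (cinner (A x) x) powr r = (((inner (S x) x)\<^sup>2 + (inner (S' x) x)\<^sup>2) / 2) powr (r / 2)"
    using powr_half_of_square[of "cmod (cinner (A x) x)" r] by (simp add: cmod_cinner_square[OF A] S_def S'_def)
  also have "\<dots> \<le> (\<bar>inner (S x) x\<bar> powr r + \<bar>inner (S' x) x\<bar> powr r) / 2"
    using powr_midpoint_le[of "(inner (S x) x)\<^sup>2" "(inner (S' x) x)\<^sup>2" "r / 2"] r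
    by (simp add: powr_half_of_square)
  also have "\<dots> \<le> (inner (F x) x powr (1/p) * inner (G x) x powr (1/q)
      + inner (F' x) x powr (1/p) * inner (G' x) x powr (1/q)) / 2"
    using abs_inner_powr_le_fpow_abs[OF S fg r p q x] abs_inner_powr_le_fpow_abs[OF S' hk r p q x]
    by (simp add: F_def G_def F'_def G'_def)
  also have "\<dots> \<le> ((inner (F x) x + inner (F' x) x) powr (1/p) * (inner (G x) x + inner (G' x) x) powr (1/q)) / 2"
    using holder_two_terms[OF nonneg p q pq] by simp
  also have "\<dots> \<le> (norm (F + F') powr (1/p) * norm (G + G') powr (1/q)) / 2"
    using le_norm[of "F + F'"] le_norm[of "G + G'"] nonneg p q
    by (intro divide_right_mono mult_mono powr_mono2) (auto simp: blinfun.add_left inner_add_left)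
  finally show ?thesis by (simp add: F_def G_def F'_def G'_def S_def S'_def)
qed

lemma cmod_cinner_le_if_unit_bound:
  fixes A :: "'a::complex_hilbert \<Rightarrow>\<^sub>L 'a"
  assumes B: "B \<ge> 0" and r: "r > 0"
    and h: "\<And>x. norm x = 1 \<Longrightarrow> cmod (cinner (A x) x) powr r \<le> B"
  shows "cmod (cinner (A x) x) \<le> B powr (1/r) * (norm x)\<^sup>2"
proof (cases "x = 0")
  case True
  then show ?thesis by (simp add: cmod_cinner)
next
  case False
  define y where "y = (1 / norm x) *\<^sub>R x"
  have "cmod (cinner (A y) y) = (cmod (cinner (A y) y) powr r) powr (1/r)"
    using r by (simp add: powr_powr)
  also have "\<dots> \<le> B powr (1/r)" using h[of y] r False by (intro powr_mono2) (auto simp: y_def)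
  finally have "(1 / norm x)\<^sup>2 * cmod (cinner (A x) x) \<le> B powr (1/r)"
    unfolding y_def cmod_cinner_scaleR .
  thus ?thesis using False by (simp add: field_simps)
qed

lemma diag_op_apply: "diag_op A D (x, y) = (A x, D y)"
proof -
  have "bounded_linear (\<lambda>z. (A (fst z), D (snd z)))"
    by (intro bounded_linear_Pair bounded_linear_compose[OF blinfun.bounded_linear_right]
        bounded_linear_fst bounded_linear_snd)
  moreover have "(\<lambda>(x, y). (A x, D y)) = (\<lambda>z. (A (fst z), D (snd z)))" by auto
  ultimately show ?thesis by (simp add: diag_op_def bounded_linear_Blinfun_apply)
qed

lemma numrad_diag_powr_le:
  fixes A D :: "'a::complex_hilbert \<Rightarrow>\<^sub>L 'a"
  assumes BA: "BA \<ge> 0" and BD: "BD \<ge> 0" and r: "r > 0"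
    and hA: "\<And>x. norm x = 1 \<Longrightarrow> cmod (cinner (A x) x) powr r \<le> BA"
    and hD: "\<And>x. norm x = 1 \<Longrightarrow> cmod (cinner (D x) x) powr r \<le> BD"
  shows "numrad (diag_op A D) powr r \<le> max BA BD"
proof -
  define W where "W = max BA BD powr (1/r)"
  have W_bounds: "BA powr (1/r) \<le> W" "BD powr (1/r) \<le> W"
    unfolding W_def using BA BD r by (auto intro: powr_mono2)
  have bound: "cmod (cinner (diag_op A D z) z) \<le> W" if "norm z = 1" for z
  proof -
    obtain x y where z: "z = (x, y)" by fastforce
    have "cmod (cinner (diag_op A D z) z) \<le> cmod (cinner (A x) x) + cmod (cinner (D y) y)"
      unfolding z diag_op_apply cinner_Pair by (rule norm_triangle_ineq)
    also have "\<dots> \<le> W * (norm x)\<^sup>2 + W * (norm y)\<^sup>2"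
      using cmod_cinner_le_if_unit_bound[OF BA r hA, of x] cmod_cinner_le_if_unit_bound[OF BD r hD, of y]
        W_bounds by (meson add_mono mult_right_mono order_trans zero_le_power2)
    also have "\<dots> = W" using that z by (simp add: norm_Pair distrib_left[symmetric])
    finally show ?thesis .
  qed
  have "numrad (diag_op A D) \<le> W"
    unfolding numrad_def using bound by (intro cSup_least) (auto simp: W_def)
  moreover have "0 \<le> numrad (diag_op A D)"
    unfolding numrad_def using bound by (intro cSup_upper2[of 0]) (auto intro!: bdd_aboveI[of _ W])
  ultimately have "numrad (diag_op A D) powr r \<le> W powr r" using r by (intro powr_mono2) auto
  also have "W powr r = max BA BD" using r BA by (simp add: W_def powr_powr)
  finally show ?thesis .
qed

lemma max_half_powr_mult_le:
  fixes a b c d u v :: real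
  assumes "a \<ge> 0" "b \<ge> 0" "c \<ge> 0" "d \<ge> 0" "u \<ge> 0" "v \<ge> 0"
  shows "max (1/2 * a powr u * c powr v) (1/2 * b powr u * d powr v)
      \<le> 1/2 * (max a b) powr u * (max c d) powr v"
proof -
  have "a powr u * c powr v \<le> max a b powr u * max c d powr v"
    "b powr u * d powr v \<le> max a b powr u * max c d powr v"
    using assms by (auto intro!: mult_mono powr_mono2)
  thus ?thesis by (simp add: mult.assoc)
qed

lemma numrad_diag_powr_le_mixed:
  fixes A D :: "'a::complex_hilbert \<Rightarrow>\<^sub>L 'a"
  assumes A: "clinear_op A" and D: "clinear_op D"
    and r: "r \<ge> 2" and p: "p > 1" and q: "q > 1" and pq: "1/p + 1/q = 1"
    and fg: "schwarz_pair f g" and hk: "schwarz_pair h k"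
  shows "numrad (diag_op A D) powr r \<le> 1/2 *
     (max (norm (fpow_abs f (r*p) (ReOp A + ImOp A) + fpow_abs h (r*p) (ReOp A - ImOp A)))
          (norm (fpow_abs f (r*p) (ReOp D + ImOp D) + fpow_abs h (r*p) (ReOp D - ImOp D)))) powr (1/p) *
     (max (norm (fpow_abs g (r*q) (ReOp A + ImOp A) + fpow_abs k (r*q) (ReOp A - ImOp A)))
          (norm (fpow_abs g (r*q) (ReOp D + ImOp D) + fpow_abs k (r*q) (ReOp D - ImOp D)))) powr (1/q)"
proof -
  have "1/p \<ge> 0" "1/q \<ge> 0" "r > 0" using p q r by auto
  thus ?thesis
    by (intro order_trans[OF numrad_diag_powr_le max_half_powr_mult_le]
        cinner_powr_le_unit[OF A r p q pq fg hk] cinner_powr_le_unit[OF D r p q pq fg hk]) simp_all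
qed

theorem theorem3p11:
  fixes A D :: "'h::complex_hilbert \<Rightarrow>\<^sub>L 'h"
    and r p q :: real
    and f1 g1 f2 g2 :: "real \<Rightarrow> real"
  assumes hA: "clinear_op A" and hD: "clinear_op D"
    and hr: "r \<ge> 2" and hp: "p > 1" and hq: "q > 1" and hpq: "1/p + 1/q = 1"
    and cf1: "continuous_on {0..} f1" and cg1: "continuous_on {0..} g1"
    and cf2: "continuous_on {0..} f2" and cg2: "continuous_on {0..} g2"
    and nf1: "\<forall>t\<ge>0. f1 t \<ge> 0" and ng1: "\<forall>t\<ge>0. g1 t \<ge> 0"
    and nf2: "\<forall>t\<ge>0. f2 t \<ge> 0" and ng2: "\<forall>t\<ge>0. g2 t \<ge> 0"
    and fg1: "\<forall>t\<ge>0. f1 t * g1 t = t" and fg2: "\<forall>t\<ge>0. f2 t * g2 t = t"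
  defines "T \<equiv> diag_op A D"
    and "\<alpha> \<equiv> norm (fpow_abs f1 (r*p) (ReOp A + ImOp A) + fpow_abs f2 (r*p) (ReOp A - ImOp A))"
    and "\<beta> \<equiv> norm (fpow_abs f1 (r*p) (ReOp D + ImOp D) + fpow_abs f2 (r*p) (ReOp D - ImOp D))"
    and "\<gamma> \<equiv> norm (fpow_abs g1 (r*q) (ReOp A + ImOp A) + fpow_abs g2 (r*q) (ReOp A - ImOp A))"
    and "\<delta> \<equiv> norm (fpow_abs g1 (r*q) (ReOp D + ImOp D) + fpow_abs g2 (r*q) (ReOp D - ImOp D))"
    and "\<alpha>' \<equiv> norm (fpow_abs f1 (r*p) (ReOp A + ImOp A) + fpow_abs g2 (r*p) (ReOp A - ImOp A))"
    and "\<beta>' \<equiv> norm (fpow_abs f1 (r*p) (ReOp D + ImOp D) + fpow_abs g2 (r*p) (ReOp D - ImOp D))"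
    and "\<gamma>' \<equiv> norm (fpow_abs g1 (r*q) (ReOp A + ImOp A) + fpow_abs f2 (r*q) (ReOp A - ImOp A))"
    and "\<delta>' \<equiv> norm (fpow_abs g1 (r*q) (ReOp D + ImOp D) + fpow_abs f2 (r*q) (ReOp D - ImOp D))"
  shows "numrad T powr r \<le> 1/2 * (max \<alpha> \<beta>) powr (1/p) * (max \<gamma> \<delta>) powr (1/q)
       \<and> numrad T powr r \<le> 1/2 * (max \<alpha>' \<beta>') powr (1/p) * (max \<gamma>' \<delta>') powr (1/q)"
proof -
  have pair1: "schwarz_pair f1 g1" and pair2: "schwarz_pair f2 g2"
    using cf1 cg1 cf2 cg2 nf1 ng1 nf2 ng2 fg1 fg2 by (simp_all add: schwarz_pair_def)
  note bound = numrad_diag_powr_le_mixed[OF hA hD hr hp hq hpq pair1]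
  show ?thesis
    unfolding T_def \<alpha>_def \<beta>_def \<gamma>_def \<delta>_def \<alpha>'_def \<beta>'_def \<gamma>'_def \<delta>'_def
    using bound[OF pair2] bound[OF schwarz_pair_commute[OF pair2]] by blast
qed

end
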